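(* Let $n,m\ge 1$, let $R\in\mathbb{R}^{2n\times 2n}$ be symmetric, $C\in\mathbb{R}^{2m\times 2n}$, $\Sigma\in\mathbb{R}^{2m\times 2m}$ real symplectic, and consider the linear system with $A=\mathbb{J}_{2n}R-\tfrac12 C^{\sharp}C$, $B=-C^{\sharp}\Sigma$, output matrix $C$, $D=\Sigma$ (state $x\in\mathbb{R}^{2n}$). Let $\tilde{\mathcal{O}}=\begin{pmatrix}C\\ C(\mathbb{J}_{2n}R)\\ \vdots\\ C(\mathbb{J}_{2n}R)^{2n-1}\end{pmatrix}\in\mathbb{R}^{4nm\times 2n}$, and let $\tilde{\mathcal{O}}=QEZ^{-1}$ be a factorization with $Q\in\mathbb{R}^{4nm\times 4nm}$ orthogonal, $Z\in\mathbb{R}^{2n\times 2n}$ real symplectic, and $$E=\begin{pmatrix}\Xi_k&0&0&0&0&0\\ 0&I_l&0&0&0&0\\ 0&0&0&\Xi_k&0&0\\ 0&0&0&0&0&0\end{pmatrix}\in\mathbb{R}^{4nm\times 2n},$$ with column blocks of widths $k,l,n-k-l,k,l,n-k-l$, row blocks of heights $k,l,k,4nm-2k-l$, and $\Xi_k=\operatorname{diag}(\xi_1,\dots,\xi_k)$ with all $\xi_i>0$; and let $V=Z^{-1}$ (this $V$ is real symplectic and puts the system in the Kalman-like canonical form described below, with these integers $k,l$). Let $X\in\mathbb{R}^{4nm\times 4nm}$ be invertible and $Y\in\mathbb{R}^{2n\times 2n}$ real symplectic such that $$XEY=\begin{pmatrix}\Xi'_k&0&0&0&0&0\\ 0&\Xi'_l&0&0&0&0\\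 0&0&0&\Xi''_k&0&0\\ 0&0&0&0&0&0\end{pmatrix}$$ (same block sizes as $E$), where $\Xi'_k,\Xi''_k\in\mathbb{R}^{k\times k}$ and $\Xi'_l\in\mathbb{R}^{l\times l}$ are diagonal with all diagonal entries nonzero. Then $V'=Y^{-1}V$ also puts the system in the Kalman-like canonical form, i.e. $V'$ is real symplectic and, writing $\hat x=V'x=(\hat q_a,\hat q_b,\hat q_c,\hat p_a,\hat p_b,\hat p_c)$ with blocks of sizes $k,l,n-k-l,k,l,n-k-l$: the entries of $\hat q_a,\hat p_a$ are controllable and observable; the entries of $\hat p_b$ are controllable but unobservable; the entries of $\hat q_b$ are uncontrollable but observable; the entries of $\hat q_c,\hat p_c$ are uncontrollable and unobservable; and $\hat A=V'AV'^{-1}$, $\hat B=V'B$, $\hat C=CV'^{-1}$ have, with respect to this block partition, the form $$\hat A=\begin{pmatrix} * & * & 0 & * & 0 & 0\\ 0 & * & 0 & 0 & 0 & 0\\ 0 & * & * & 0 & 0 & *\\ * & * & 0 & * & 0 & 0\\ * & * & * & * & * & *\\ 0 & * & * & 0 & 0 & * \end{pmatrix},\quad \hat B=\begin{pmatrix}*\\0\\0\\ *\\ *\\0\end{pmatrix},\quad \hat C=\begin{pmatrix}* & * & 0 & * & 0 & 0\end{pmatrix},$$ where $*$ denotes blocks that are arbitrary real matrices of compatible sizes.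
   Context: $\mathbb{J}_{2k}=\begin{pmatrix}0_{k\times k}& I_k\\ -I_k & 0_{k\times k}\end{pmatrix}$. For a real $2r\times 2s$ matrix $X$, $X^{\sharp}=-\mathbb{J}_{2s}X^{\top}\mathbb{J}_{2r}$. A real $2k\times 2k$ matrix $T$ is symplectic if $TT^{\sharp}=T^{\sharp}T=I_{2k}$, equivalently $T^{\top}\mathbb{J}_{2k}T=\mathbb{J}_{2k}$. (A factorization $\tilde{\mathcal{O}}=QEZ^{-1}$ of the stated type always exists.) For a linear system with matrices $(A,B,C)$ and $2n$-dimensional state, the controllability matrix is $\mathcal{C}=(B\;AB\;\cdots\;A^{2n-1}B)$ and the observability matrix is $\mathcal{O}=(C^{\top}\;(CA)^{\top}\;\cdots\;(CA^{2n-1})^{\top})^{\top}$; the controllable subspace is $\operatorname{Im}\mathcal{C}$, the unobservable subspace is $\operatorname{Ker}\mathcal{O}$, the uncontrollable subspace is the orthogonal complement of $\operatorname{Im}\mathcal{C}$ in $\mathbb{R}^{2n}$, and the observable subspace is the orthogonal complement of $\operatorname{Ker}\mathcal{O}$. For the transformed system $(\hat A,\hat B,\hat C)$, the $i$-th transformed coordinate is called controllable (resp. uncontrollable, observable, unobservable) if the standard basis vector $e_i$ lies in the corresponding subspace of the transformed system. *)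

theory Defs
  imports "Jordan_Normal_Form.Matrix"
begin

definition Jmat :: "nat \<Rightarrow> real mat" where
  "Jmat k = four_block_mat (0\<^sub>m k k) (1\<^sub>m k) (- 1\<^sub>m k) (0\<^sub>m k k)"

definition sharp :: "real mat \<Rightarrow> real mat" where
  "sharp X = - (Jmat (dim_col X div 2) * transpose_mat X * Jmat (dim_row X div 2))"

definition symplectic :: "nat \<Rightarrow> real mat \<Rightarrow> bool" where
  "symplectic k T \<longleftrightarrow> T \<in> carrier_mat (2*k) (2*k) \<and>
     T * sharp T = 1\<^sub>m (2*k) \<and> sharp T * T = 1\<^sub>m (2*k)"

definition minv :: "real mat \<Rightarrow> real mat" where
  "minv A = (SOME B. B \<in> carrier_mat (dim_row A) (dim_row A) \<and>
       A * B = 1\<^sub>m (dim_row A) \<and> B * A = 1\<^sub>m (dim_row A))"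

definition ctrb_mat :: "real mat \<Rightarrow> real mat \<Rightarrow> nat \<Rightarrow> real mat" where
  "ctrb_mat A B N = mat (dim_row B) (N * dim_col B)
     (\<lambda>(i,j). ((A ^\<^sub>m (j div dim_col B)) * B) $$ (i, j mod dim_col B))"

definition obsv_mat :: "real mat \<Rightarrow> real mat \<Rightarrow> nat \<Rightarrow> real mat" where
  "obsv_mat C M N = mat (N * dim_row C) (dim_col C)
     (\<lambda>(i,j). (C * (M ^\<^sub>m (i div dim_row C))) $$ (i mod dim_row C, j))"

definition mat_image :: "real mat \<Rightarrow> real vec set" where
  "mat_image M = {M *\<^sub>v u | u. u \<in> carrier_vec (dim_col M)}"

definition mat_ker :: "real mat \<Rightarrow> real vec set" where
  "mat_ker M = {x \<in> carrier_vec (dim_col M). M *\<^sub>v x = 0\<^sub>v (dim_row M)}"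

definition orth_compl :: "nat \<Rightarrow> real vec set \<Rightarrow> real vec set" where
  "orth_compl N S = {x \<in> carrier_vec N. \<forall>y\<in>S. x \<bullet> y = 0}"

definition controllable_sub :: "nat \<Rightarrow> real mat \<Rightarrow> real mat \<Rightarrow> real vec set" where
  "controllable_sub N A B = mat_image (ctrb_mat A B N)"
definition uncontrollable_sub :: "nat \<Rightarrow> real mat \<Rightarrow> real mat \<Rightarrow> real vec set" where
  "uncontrollable_sub N A B = orth_compl N (controllable_sub N A B)"
definition unobservable_sub :: "nat \<Rightarrow> real mat \<Rightarrow> real mat \<Rightarrow> real vec set" where
  "unobservable_sub N A C = mat_ker (obsv_mat C A N)"
definition observable_sub :: "nat \<Rightarrow> real mat \<Rightarrow> real mat \<Rightarrow> real vec set" where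
  "observable_sub N A C = orth_compl N (unobservable_sub N A C)"

text \<open>Block index (0..5) of coordinate i < 2n for the partition with block sizes
  k, l, n-k-l, k, l, n-k-l (blocks q_a, q_b, q_c, p_a, p_b, p_c).\<close>
definition blk :: "nat \<Rightarrow> nat \<Rightarrow> nat \<Rightarrow> nat \<Rightarrow> nat" where
  "blk n k l i = (let h = (if i < n then 0 else 3); r = (if i < n then i else i - n) in
      h + (if r < k then 0 else if r < k + l then 1 else 2))"

definition Ahat_zero :: "nat \<Rightarrow> nat \<Rightarrow> bool" where
  "Ahat_zero r c \<longleftrightarrow>
     (r = 0 \<and> c \<in> {2,4,5}) \<or> (r = 1 \<and> c \<in> {0,2,3,4,5}) \<or> (r = 2 \<and> c \<in> {0,3,4}) \<or>
     (r = 3 \<and> c \<in> {2,4,5}) \<or> (r = 5 \<and> c \<in> {0,3,4})"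

definition Bhat_zero :: "nat \<Rightarrow> bool" where
  "Bhat_zero r \<longleftrightarrow> r \<in> {1,2,5}"

definition Chat_zero :: "nat \<Rightarrow> bool" where
  "Chat_zero c \<longleftrightarrow> c \<in> {2,4,5}"

text \<open>A 4nm x 2n (here: Nr x 2n) matrix with block structure
  [D1 0 0 0 0 0; 0 D2 0 0 0 0; 0 0 0 D3 0 0; 0 0 0 0 0 0]
  with column blocks k,l,n-k-l,k,l,n-k-l and row blocks k,l,k,rest,
  where D1 = diag d1 (k x k), D2 = diag d2 (l x l), D3 = diag d3 (k x k).\<close>
definition blockE :: "nat \<Rightarrow> nat \<Rightarrow> nat \<Rightarrow> nat \<Rightarrow> (nat \<Rightarrow> real) \<Rightarrow> (nat \<Rightarrow> real)
     \<Rightarrow> (nat \<Rightarrow> real) \<Rightarrow> real mat" where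
  "blockE Nr n k l d1 d2 d3 = mat Nr (2*n) (\<lambda>(i,j).
     if i < k \<and> j = i then d1 i
     else if k \<le> i \<and> i < k + l \<and> j = i then d2 (i - k)
     else if k + l \<le> i \<and> i < 2*k + l \<and> j = n + (i - (k + l)) then d3 (i - (k + l))
     else 0)"

definition kalman_like_form ::
  "nat \<Rightarrow> nat \<Rightarrow> nat \<Rightarrow> real mat \<Rightarrow> real mat \<Rightarrow> real mat \<Rightarrow> real mat \<Rightarrow> bool" where
  "kalman_like_form n k l A B C V \<longleftrightarrow>
     (let Ah = V * A * minv V; Bh = V * B; Ch = C * minv V; N = 2*n in
     symplectic n V \<and>
     (\<forall>i<N. blk n k l i \<in> {0,3} \<longrightarrow>
         unit_vec N i \<in> controllable_sub N Ah Bh \<and> unit_vec N i \<in> observable_sub N Ah Ch) \<and>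
     (\<forall>i<N. blk n k l i = 4 \<longrightarrow>
         unit_vec N i \<in> controllable_sub N Ah Bh \<and> unit_vec N i \<in> unobservable_sub N Ah Ch) \<and>
     (\<forall>i<N. blk n k l i = 1 \<longrightarrow>
         unit_vec N i \<in> uncontrollable_sub N Ah Bh \<and> unit_vec N i \<in> observable_sub N Ah Ch) \<and>
     (\<forall>i<N. blk n k l i \<in> {2,5} \<longrightarrow>
         unit_vec N i \<in> uncontrollable_sub N Ah Bh \<and> unit_vec N i \<in> unobservable_sub N Ah Ch) \<and>
     (\<forall>i<N. \<forall>j<N. Ahat_zero (blk n k l i) (blk n k l j) \<longrightarrow> Ah $$ (i,j) = 0) \<and>
     (\<forall>i<N. \<forall>j<dim_col B. Bhat_zero (blk n k l i) \<longrightarrow> Bh $$ (i,j) = 0) \<and>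
     (\<forall>i<dim_row C. \<forall>j<N. Chat_zero (blk n k l j) \<longrightarrow> Ch $$ (i,j) = 0))"

end

theory Submission
  imports Defs "Jordan_Normal_Form.VS_Connect"
begin

text \<open>
  Put \<open>W = Z Y\<close>, so that \<open>V' = W\<^sup>-\<^sup>1\<close>. Conjugation by the symplectic \<open>W\<close> replaces
  \<open>(R, C)\<close> by \<open>(W\<^sup>T R W, C W)\<close> and preserves the shape \<open>A = J R - C\<^sup>\<sharp> C / 2\<close>,
  \<open>B = - C\<^sup>\<sharp> \<Sigma>\<close>, while the observability matrix \<open>O\<close> of \<open>(C, J R)\<close> becomes
  \<open>O W = (Q X\<^sup>-\<^sup>1) (X E Y)\<close>: again a left-invertible matrix times the diagonal block
  pattern. It therefore suffices to show that such a system is already in canonical form.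

  The kernel of \<open>O\<close> is spanned by the coordinates of \<open>q\<^sub>c, p\<^sub>b, p\<^sub>c\<close>; by a
  Cayley--Hamilton argument it is \<open>J R\<close>-invariant, and since \<open>A\<close> differs from \<open>J R\<close> by
  output feedback it is the unobservable subspace of \<open>(A, C)\<close>. Invariance together with the
  symmetry of \<open>R\<close> yields the zero blocks of \<open>J R\<close>, \<open>C\<close> and \<open>C\<^sup>\<sharp>\<close>, hence of
  \<open>A, B, C\<close>, and the zero rows of \<open>A\<^sup>j B\<close> give the uncontrollable coordinates. Finally,
  \<open>J (C (J R)\<^sup>j)\<^sup>T = (J R)\<^sup>j B G\<^sub>j\<close>, so \<open>J\<close> maps the row space of \<open>O\<close>, spanned by the
  observable coordinates, into the controllable subspace; this gives the controllable
  coordinates \<open>q\<^sub>a, p\<^sub>a, p\<^sub>b\<close>.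
\<close>

declare assoc_mult_mat[simp del]

lemma assoc_mult_mat_dims:
  "dim_col A = dim_row B \<Longrightarrow> dim_col B = dim_row C \<Longrightarrow> A * B * C = A * (B * C)"
  by (metis assoc_mult_mat carrier_matI)

lemma mult_mat_assoc_middle:
  "dim_col A = dim_row B \<Longrightarrow> dim_col B = dim_row C \<Longrightarrow> dim_col C = dim_row D \<Longrightarrow>
   (A * B) * (C * D) = A * ((B * C) * D)"
  by (simp add: assoc_mult_mat_dims)

lemma index_mult_mat_sum:
  assumes "A \<in> carrier_mat a b" "B \<in> carrier_mat b c" "i < a" "j < c"
  shows "(A * B) $$ (i,j) = (\<Sum>t<b. A $$ (i,t) * B $$ (t,j))"
  using assms by (auto simp: scalar_prod_def lessThan_atLeast0 intro!: sum.cong)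

lemma index_mult_mat_vec_sum:
  "M \<in> carrier_mat r c \<Longrightarrow> x \<in> carrier_vec c \<Longrightarrow> t < r \<Longrightarrow>
   (M *\<^sub>v x) $ t = (\<Sum>s<c. M $$ (t,s) * x $ s)"
  by (auto simp: scalar_prod_def lessThan_atLeast0 intro!: sum.cong)

lemma index_mult_mat_vec_add:
  "M \<in> carrier_mat q p \<Longrightarrow> a \<in> carrier_vec p \<Longrightarrow> b \<in> carrier_vec p \<Longrightarrow> t < q \<Longrightarrow>
   (M *\<^sub>v (a + b)) $ t = (M *\<^sub>v a) $ t + (M *\<^sub>v b) $ t"
  by (subst mult_add_distrib_mat_vec[of _ q p]) auto

lemma index_mult_mat_vec_smult:
  "(M :: real mat) \<in> carrier_mat q p \<Longrightarrow> a \<in> carrier_vec p \<Longrightarrow> t < q \<Longrightarrow>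
   (M *\<^sub>v (c \<cdot>\<^sub>v a)) $ t = c * (M *\<^sub>v a) $ t"
  by (subst mult_mat_vec[of _ q p]) auto

lemma index_mult_mat_unit_vec:
  "(M :: 'a :: semiring_1 mat) \<in> carrier_mat r c \<Longrightarrow> i < r \<Longrightarrow> j < c \<Longrightarrow>
   (M *\<^sub>v unit_vec c j) $ i = M $$ (i,j)"
  using scalar_prod_right_unit[of j c "row M i"] by simp

lemma mult_mat_zero_vec[simp]: "M \<in> carrier_mat r c \<Longrightarrow> M *\<^sub>v 0\<^sub>v c = 0\<^sub>v r"
  by (rule eq_vecI) (auto simp: scalar_prod_def)

lemma pow_mat_Suc_left: "M \<in> carrier_mat N N \<Longrightarrow> M ^\<^sub>m Suc i = M * M ^\<^sub>m i"
proof (induct i)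
  case (Suc i)
  have "M ^\<^sub>m Suc (Suc i) = (M * M ^\<^sub>m i) * M" using Suc by simp
  also have "\<dots> = M * (M ^\<^sub>m i * M)" using Suc by (intro assoc_mult_mat[of _ N N _ N _ N]) auto
  finally show ?case by simp
qed simp

lemma pow_mat_Suc_mult_vec:
  "M \<in> carrier_mat N N \<Longrightarrow> x \<in> carrier_vec N \<Longrightarrow> M ^\<^sub>m Suc i *\<^sub>v x = M *\<^sub>v (M ^\<^sub>m i *\<^sub>v x)"
  unfolding pow_mat_Suc_left[of M N] by (simp add: assoc_mult_mat_vec[of _ N N _ N])

lemma mult_mat_vec_vec_sum:
  assumes M: "M \<in> carrier_mat r q" and g: "\<forall>i\<in>F. g i \<in> carrier_vec q"
  shows "M *\<^sub>v vec q (\<lambda>t. \<Sum>i\<in>F. g i $ t) = vec r (\<lambda>t. \<Sum>i\<in>F. (M *\<^sub>v g i) $ t)"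
proof (rule eq_vecI)
  fix t assume "t < dim_vec (vec r (\<lambda>t. \<Sum>i\<in>F. (M *\<^sub>v g i) $ t))"
  then have t: "t < r" by simp
  have "(M *\<^sub>v vec q (\<lambda>t. \<Sum>i\<in>F. g i $ t)) $ t = (\<Sum>s<q. M $$ (t,s) * (\<Sum>i\<in>F. g i $ s))"
    using M t by (subst index_mult_mat_vec_sum[of _ r q]) auto
  also have "\<dots> = (\<Sum>i\<in>F. \<Sum>s<q. M $$ (t,s) * g i $ s)"
    by (simp add: sum_distrib_left sum.swap[of _ F])
  also have "\<dots> = (\<Sum>i\<in>F. (M *\<^sub>v g i) $ t)"
    using M t g by (intro sum.cong refl) (subst index_mult_mat_vec_sum[of _ r q], auto)
  finally show "(M *\<^sub>v vec q (\<lambda>t. \<Sum>i\<in>F. g i $ t)) $ t = vec r (\<lambda>t. \<Sum>i\<in>F. (M *\<^sub>v g i) $ t) $ t"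
    using t by simp
qed (use M in auto)

lemma sum_lessThan_mult_div_mod:
  fixes g :: "nat \<Rightarrow> nat \<Rightarrow> 'a::comm_monoid_add"
  shows "(\<Sum>c<N*p. g (c div p) (c mod p)) = (\<Sum>j<N. \<Sum>r<p. g j r)"
proof -
  have "(\<Sum>c<N*p. g (c div p) (c mod p)) = (\<Sum>(j,r)\<in>{..<N}\<times>{..<p}. g j r)"
  proof (rule sum.reindex_bij_witness[where i="\<lambda>(j,r). j*p+r" and j="\<lambda>c. (c div p, c mod p)"])
    fix c assume c: "c \<in> {..<N*p}"
    then have "p > 0" by (cases p) auto
    with c show "(c div p, c mod p) \<in> {..<N} \<times> {..<p}" by (auto simp: less_mult_imp_div_less)
  next
    fix a assume "a \<in> {..<N} \<times> {..<p}"
    then obtain j r where a: "a = (j,r)" "j < N" "r < p" by auto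
    then have "j*p + r < Suc j * p" by simp
    also have "\<dots> \<le> N * p" using a by (intro mult_right_mono) auto
    finally show "(case a of (j, r) \<Rightarrow> j * p + r) \<in> {..<N*p}" using a by simp
  qed auto
  also have "\<dots> = (\<Sum>j<N. \<Sum>r<p. g j r)" by (rule sum.cartesian_product[symmetric])
  finally show ?thesis .
qed

lemma minv_eqI:
  assumes A: "A \<in> carrier_mat d d" and B: "B \<in> carrier_mat d d"
    and AB: "A * B = 1\<^sub>m d" and BA: "B * A = 1\<^sub>m d"
  shows "minv A = B"
proof -
  let ?P = "\<lambda>B. B \<in> carrier_mat (dim_row A) (dim_row A) \<and> A * B = 1\<^sub>m (dim_row A) \<and> B * A = 1\<^sub>m (dim_row A)"
  have "?P B" using A B AB BA by auto
  then have "?P (minv A)" unfolding minv_def by (rule someI)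
  then have M: "minv A \<in> carrier_mat d d" "minv A * A = 1\<^sub>m d" using A by auto
  have "minv A = minv A * (A * B)" using AB M by simp
  also have "\<dots> = (minv A * A) * B" using M A B by (intro assoc_mult_mat[symmetric]) auto
  finally show ?thesis using M B by simp
qed

lemma minv_invertible_mat:
  assumes A: "A \<in> carrier_mat d d" and inv: "invertible_mat A"
  shows "minv A \<in> carrier_mat d d" "A * minv A = 1\<^sub>m d" "minv A * A = 1\<^sub>m d"
proof -
  obtain B where "inverts_mat A B" "inverts_mat B A" using inv unfolding invertible_mat_def by auto
  then have AB: "A * B = 1\<^sub>m d" and BA: "B * A = 1\<^sub>m (dim_row B)" using A unfolding inverts_mat_def by auto
  have "dim_col B = d" using AB A by (metis index_mult_mat(3) index_one_mat(3))
  moreover have "dim_row B = d" using BA A by (metis index_mult_mat(3) index_one_mat(3) carrier_matD(2))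
  ultimately have B: "B \<in> carrier_mat d d" by auto
  then have "minv A = B" using AB BA by (intro minv_eqI[OF A B]) auto
  then show "minv A \<in> carrier_mat d d" "A * minv A = 1\<^sub>m d" "minv A * A = 1\<^sub>m d" using B AB BA by auto
qed

section \<open>The symplectic form\<close>

lemma Jmat_carrier[simp]: "Jmat n \<in> carrier_mat (2*n) (2*n)"
  unfolding Jmat_def mult_2 by (rule four_block_carrier_mat) auto

lemma Jmat_dims[simp]: "dim_row (Jmat n) = 2*n" "dim_col (Jmat n) = 2*n"
  using Jmat_carrier[of n] unfolding carrier_mat_def by auto

lemma index_Jmat: "i < 2*n \<Longrightarrow> j < 2*n \<Longrightarrow> Jmat n $$ (i,j) =
  (if i < n \<and> j = i + n then 1 else if n \<le> i \<and> j = i - n then -1 else 0)"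
  unfolding Jmat_def by (auto simp: index_mat_four_block)

lemma index_Jmat_mult:
  assumes M: "M \<in> carrier_mat (2*n) c" and i: "i < 2*n" and j: "j < c"
  shows "(Jmat n * M) $$ (i,j) = (if i < n then M $$ (i+n, j) else - M $$ (i-n, j))"
proof -
  have "(Jmat n * M) $$ (i,j) = (\<Sum>t<2*n. Jmat n $$ (i,t) * M $$ (t,j))"
    using M i j by (intro index_mult_mat_sum) auto
  also have "\<dots> = (\<Sum>t<2*n. if t = (if i < n then i + n else i - n)
                      then (if i < n then M $$ (t,j) else - M $$ (t,j)) else 0)"
    using i by (intro sum.cong) (auto simp: index_Jmat)
  also have "\<dots> = (if i < n then M $$ (i+n, j) else - M $$ (i-n, j))"
    using i by (subst sum.delta) auto
  finally show ?thesis .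
qed

lemma index_mult_Jmat:
  assumes M: "M \<in> carrier_mat r (2*n)" and i: "i < r" and j: "j < 2*n"
  shows "(M * Jmat n) $$ (i,j) = (if j < n then - M $$ (i, j+n) else M $$ (i, j-n))"
proof -
  have "(M * Jmat n) $$ (i,j) = (\<Sum>t<2*n. M $$ (i,t) * Jmat n $$ (t,j))"
    using M i j by (intro index_mult_mat_sum) auto
  also have "\<dots> = (\<Sum>t<2*n. if t = (if j < n then j + n else j - n)
                      then (if j < n then - M $$ (i,t) else M $$ (i,t)) else 0)"
    using j by (intro sum.cong) (auto simp: index_Jmat)
  also have "\<dots> = (if j < n then - M $$ (i, j+n) else M $$ (i, j-n))"
    using j by (subst sum.delta) auto
  finally show ?thesis .
qed

lemma index_Jmat_mult_vec:
  assumes x: "x \<in> carrier_vec (2*n)" and i: "i < 2*n"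
  shows "(Jmat n *\<^sub>v x) $ i = (if i < n then x $ (i+n) else - x $ (i-n))"
proof -
  have "(Jmat n *\<^sub>v x) $ i = (\<Sum>t<2*n. Jmat n $$ (i,t) * x $ t)"
    using x i by (intro index_mult_mat_vec_sum) auto
  also have "\<dots> = (\<Sum>t<2*n. if t = (if i < n then i + n else i - n)
                      then (if i < n then x $ t else - x $ t) else 0)"
    using i by (intro sum.cong) (auto simp: index_Jmat)
  also have "\<dots> = (if i < n then x $ (i+n) else - x $ (i-n))"
    using i by (subst sum.delta) auto
  finally show ?thesis .
qed

lemma Jmat_mult_Jmat: "Jmat n * Jmat n = - 1\<^sub>m (2*n)"
  by (rule eq_matI) (auto simp del: index_mult_mat(1) simp: index_Jmat_mult[OF Jmat_carrier] index_Jmat)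

lemma Jmat_mult_Jmat_mult: "dim_row A = 2*n \<Longrightarrow> Jmat n * (Jmat n * A) = - A"
  by (subst assoc_mult_mat_dims[symmetric]) (auto simp: Jmat_mult_Jmat)

lemma transpose_Jmat: "transpose_mat (Jmat n) = - Jmat n"
  by (rule eq_matI) (auto simp: index_Jmat)

lemma sharp_carrier_eq:
  "X \<in> carrier_mat (2*r) (2*s) \<Longrightarrow> sharp X = - (Jmat s * transpose_mat X * Jmat r)"
  unfolding sharp_def by auto

lemma sharp_carrier[simp]: "X \<in> carrier_mat (2*r) (2*s) \<Longrightarrow> sharp X \<in> carrier_mat (2*s) (2*r)"
  by (auto simp: sharp_carrier_eq)

lemma sharp_mult:
  assumes X: "X \<in> carrier_mat (2*r) (2*s)" and Y: "Y \<in> carrier_mat (2*s) (2*t)"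
  shows "sharp (X * Y) = sharp Y * sharp X"
proof -
  have "sharp Y * sharp X = (Jmat t * transpose_mat Y * Jmat s) * (Jmat s * transpose_mat X * Jmat r)"
    using X Y by (simp add: sharp_carrier_eq)
  also have "\<dots> = Jmat t * (transpose_mat Y * (Jmat s * (Jmat s * (transpose_mat X * Jmat r))))"
    using X Y by (simp add: assoc_mult_mat_dims)
  also have "\<dots> = - (Jmat t * (transpose_mat Y * (transpose_mat X * Jmat r)))"
    using X Y by (simp add: Jmat_mult_Jmat_mult)
  also have "\<dots> = sharp (X * Y)"
    using X Y by (simp add: sharp_carrier_eq[of "X * Y" r t] transpose_mult[OF X Y] assoc_mult_mat_dims)
  finally show ?thesis by simp
qed

lemma sharp_sharp:
  assumes X: "X \<in> carrier_mat (2*r) (2*s)"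
  shows "sharp (sharp X) = X"
proof -
  have JX: "Jmat s * transpose_mat X \<in> carrier_mat (2*s) (2*r)" using X by auto
  have "transpose_mat (Jmat s * transpose_mat X * Jmat r)
      = transpose_mat (Jmat r) * transpose_mat (Jmat s * transpose_mat X)"
    by (rule transpose_mult[OF JX Jmat_carrier])
  also have "\<dots> = Jmat r * X * Jmat s"
    using X by (simp add: transpose_mult[of _ "2*s" "2*s"] transpose_Jmat assoc_mult_mat_dims)
  finally have T: "transpose_mat (sharp X) = - (Jmat r * X * Jmat s)"
    using X by (simp add: sharp_carrier_eq transpose_uminus)
  have "sharp (sharp X) = Jmat r * (Jmat r * (X * (Jmat s * Jmat s)))"
    using X by (simp add: sharp_carrier_eq[of "sharp X" s r] T assoc_mult_mat_dims)
  also have "\<dots> = X" using X by (simp add: Jmat_mult_Jmat_mult Jmat_mult_Jmat)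
  finally show ?thesis .
qed

lemma symplectic_carrier: "symplectic n T \<Longrightarrow> T \<in> carrier_mat (2*n) (2*n)"
  unfolding symplectic_def by simp

lemma symplectic_minv: "symplectic n T \<Longrightarrow> minv T = sharp T"
  unfolding symplectic_def by (intro minv_eqI[of _ "2*n"]) auto

lemma symplectic_sharp: "symplectic n T \<Longrightarrow> symplectic n (sharp T)"
  unfolding symplectic_def by (auto simp: sharp_sharp)

lemma symplectic_mult:
  assumes Y: "symplectic n Y" and Z: "symplectic n Z"
  shows "symplectic n (Z * Y)"
proof -
  have c: "Y \<in> carrier_mat (2*n) (2*n)" "Z \<in> carrier_mat (2*n) (2*n)"
    "sharp Y \<in> carrier_mat (2*n) (2*n)" "sharp Z \<in> carrier_mat (2*n) (2*n)"
    using Y Z by (auto simp: symplectic_def)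
  have "(Z * Y) * sharp (Z * Y) = Z * ((Y * sharp Y) * sharp Z)"
    "sharp (Z * Y) * (Z * Y) = sharp Y * ((sharp Z * Z) * Y)"
    using c by (simp_all add: sharp_mult assoc_mult_mat_dims carrier_matD[OF c(3)] carrier_matD[OF c(4)])
  then show ?thesis using Y Z c by (simp add: symplectic_def carrier_matD[OF c(4)])
qed

lemma symplectic_one: "symplectic n (1\<^sub>m (2*n))"
  unfolding symplectic_def by (simp add: sharp_carrier_eq[of "1\<^sub>m (2*n)" n n] transpose_Jmat Jmat_mult_Jmat)

lemma symplectic_minv_mult:
  assumes Y: "symplectic n Y" and Z: "symplectic n Z"
  shows "symplectic n (minv Y * minv Z)" and "minv (minv Y * minv Z) = Z * Y"
proof -
  have ZY: "Z * Y \<in> carrier_mat (2*n) (2*n)"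
    using symplectic_carrier[OF Z] symplectic_carrier[OF Y] by simp
  have eq: "minv Y * minv Z = sharp (Z * Y)"
    unfolding symplectic_minv[OF Y] symplectic_minv[OF Z]
    by (rule sharp_mult[OF symplectic_carrier[OF Z] symplectic_carrier[OF Y], symmetric])
  show V: "symplectic n (minv Y * minv Z)"
    unfolding eq by (rule symplectic_sharp[OF symplectic_mult[OF Y Z]])
  show "minv (minv Y * minv Z) = Z * Y"
    using symplectic_minv[OF V] sharp_sharp[OF ZY] by (simp add: eq)
qed

section \<open>Observability\<close>

context vec_space
begin

lemma span_subset_closed:
  assumes "S \<subseteq> T" "T \<subseteq> carrier_vec n" "0\<^sub>v n \<in> T"
    and "\<And>x y. x \<in> T \<Longrightarrow> y \<in> T \<Longrightarrow> x + y \<in> T" and "\<And>c x. x \<in> T \<Longrightarrow> c \<cdot>\<^sub>v x \<in> T"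
  shows "span S \<subseteq> T"
proof (rule span_is_subset[OF assms(1)])
  show "submodule class_ring T V"
    unfolding submodule_def using assms(2-5) by (auto simp: class_ring_simps vec_module)
qed

lemma mult_mat_vec_span_invariant:
  assumes M: "M \<in> carrier_mat n n" and S: "S \<subseteq> carrier_vec n"
    and MS: "\<And>u. u \<in> S \<Longrightarrow> M *\<^sub>v u \<in> span S" and y: "y \<in> span S"
  shows "M *\<^sub>v y \<in> span S"
proof -
  have "span S \<subseteq> {y \<in> carrier_vec n. M *\<^sub>v y \<in> span S}"
  proof (rule span_subset_closed)
    show "S \<subseteq> {y \<in> carrier_vec n. M *\<^sub>v y \<in> span S}" using S MS by auto
  next
    fix y z assume "y \<in> {y \<in> carrier_vec n. M *\<^sub>v y \<in> span S}" "z \<in> {y \<in> carrier_vec n. M *\<^sub>v y \<in> span S}"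
    then show "y + z \<in> {y \<in> carrier_vec n. M *\<^sub>v y \<in> span S}"
      using span_add1[OF S] by (simp add: mult_add_distrib_mat_vec[OF M])
  next
    fix c y assume "y \<in> {y \<in> carrier_vec n. M *\<^sub>v y \<in> span S}"
    then show "c \<cdot>\<^sub>v y \<in> {y \<in> carrier_vec n. M *\<^sub>v y \<in> span S}"
      using smult_in_span[OF S] by (simp add: mult_mat_vec[OF M])
  qed (use M span_zero in simp_all)
  then show ?thesis using y by blast
qed

lemma mult_mat_vec_span_zero:
  assumes C: "C \<in> carrier_mat p n" and S: "S \<subseteq> carrier_vec n"
    and CS: "\<And>u. u \<in> S \<Longrightarrow> C *\<^sub>v u = 0\<^sub>v p" and y: "y \<in> span S"
  shows "C *\<^sub>v y = 0\<^sub>v p"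
proof -
  have "span S \<subseteq> {y \<in> carrier_vec n. C *\<^sub>v y = 0\<^sub>v p}"
  proof (rule span_subset_closed)
    show "S \<subseteq> {y \<in> carrier_vec n. C *\<^sub>v y = 0\<^sub>v p}" using S CS by auto
  next
    fix y z assume "y \<in> {y \<in> carrier_vec n. C *\<^sub>v y = 0\<^sub>v p}" "z \<in> {y \<in> carrier_vec n. C *\<^sub>v y = 0\<^sub>v p}"
    then show "y + z \<in> {y \<in> carrier_vec n. C *\<^sub>v y = 0\<^sub>v p}"
      by (simp add: mult_add_distrib_mat_vec[OF C])
  next
    fix c y assume "y \<in> {y \<in> carrier_vec n. C *\<^sub>v y = 0\<^sub>v p}"
    then show "c \<cdot>\<^sub>v y \<in> {y \<in> carrier_vec n. C *\<^sub>v y = 0\<^sub>v p}"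
      by (auto simp: mult_mat_vec[OF C] intro!: eq_vecI)
  qed (use C in simp_all)
  then show ?thesis using y by blast
qed

lemma exists_in_span_of_predecessors:
  assumes v: "\<And>i. v i \<in> carrier_vec n"
  shows "\<exists>d\<le>n. v d \<in> span (v ` {..<d})"
proof (rule ccontr)
  assume "\<not> ?thesis"
  then have nd: "\<And>d. d \<le> n \<Longrightarrow> v d \<notin> span (v ` {..<d})" by auto
  have vS: "v ` I \<subseteq> carrier_vec n" for I using v by auto
  have "d \<le> Suc n \<Longrightarrow> lin_indpt (v ` {..<d}) \<and> card (v ` {..<d}) = d" for d
  proof (induct d)
    case 0 then show ?case by (auto simp: lin_dep_def)
  next
    case (Suc d)
    then have IH: "lin_indpt (v ` {..<d})" "card (v ` {..<d}) = d" and nsp: "v d \<notin> span (v ` {..<d})"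
      using nd by auto
    have nin: "v d \<notin> v ` {..<d}" using nsp in_own_span[OF vS, of "{..<d}"] by blast
    have "\<not> lin_dep (v ` {..<d} \<union> {v d})"
      using lin_dep_iff_in_span[OF vS IH(1) v nin] nsp by auto
    moreover have "v ` {..<Suc d} = v ` {..<d} \<union> {v d}" by (auto simp: lessThan_Suc)
    moreover have "card (v ` {..<d} \<union> {v d}) = Suc d" using IH nin by simp
    ultimately show ?case by simp
  qed
  from this[of "Suc n"] have "lin_indpt (v ` {..<Suc n})" "card (v ` {..<Suc n}) = Suc n" by auto
  with li_le_dim(2)[OF fin_dim vS, of "{..<Suc n}"] dim_is_n show False by linarith
qed

end

text \<open>A discrete Cayley--Hamilton argument: the Krylov vectors \<open>M\<^sup>i x\<close> become linearly dependent
  after at most \<open>N\<close> steps, and their span is then \<open>M\<close>-invariant.\<close>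

lemma output_vanishing_all_powers:
  fixes M C :: "real mat"
  assumes M: "M \<in> carrier_mat N N" and C: "C \<in> carrier_mat p N" and x: "x \<in> carrier_vec N"
    and h: "\<forall>i<N. C *\<^sub>v (M ^\<^sub>m i *\<^sub>v x) = 0\<^sub>v p"
  shows "C *\<^sub>v (M ^\<^sub>m j *\<^sub>v x) = 0\<^sub>v p"
proof -
  interpret vec_space "TYPE(real)" N .
  define v where "v i = M ^\<^sub>m i *\<^sub>v x" for i
  have v: "v i \<in> carrier_vec N" for i
    unfolding v_def by (rule mult_mat_vec_carrier[OF pow_carrier_mat[OF M] x])
  have vSuc: "v (Suc i) = M *\<^sub>v v i" for i unfolding v_def by (rule pow_mat_Suc_mult_vec[OF M x])
  have "\<exists>d\<le>N. v d \<in> span (v ` {..<d})" by (rule exists_in_span_of_predecessors[OF v])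
  then obtain d where d: "d \<le> N" "v d \<in> span (v ` {..<d})" by blast
  define S where "S = v ` {..<d}"
  have S: "S \<subseteq> carrier_vec N" using v by (auto simp: S_def)
  have invariant: "M *\<^sub>v y \<in> span S" if "y \<in> span S" for y
  proof (rule mult_mat_vec_span_invariant[OF M S _ that])
    fix u assume "u \<in> S"
    then obtain i where i: "i < d" "u = v i" by (auto simp: S_def)
    have "v (Suc i) \<in> span S"
    proof (cases "Suc i = d")
      case True then show ?thesis using d(2) by (simp add: S_def)
    next
      case False then have "v (Suc i) \<in> S" using i by (simp add: S_def)
      then show ?thesis by (rule span_mem[OF S])
    qed
    then show "M *\<^sub>v u \<in> span S" using i by (simp add: vSuc)
  qed
  have "v j \<in> span S"
  proof (induct j)
    case 0
    show ?case
    proof (cases "d = 0")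
      case True then show ?thesis using d(2) unfolding S_def by (simp only:)
    next
      case False then have "v 0 \<in> S" by (simp add: S_def)
      then show ?thesis by (rule span_mem[OF S])
    qed
  next
    case (Suc j) then show ?case unfolding vSuc by (rule invariant)
  qed
  then have "C *\<^sub>v v j = 0\<^sub>v p"
  proof (rule mult_mat_vec_span_zero[OF C S, rotated])
    fix u assume "u \<in> S"
    then obtain i where i: "i < d" "u = v i" by (auto simp: S_def)
    then show "C *\<^sub>v u = 0\<^sub>v p" using h d(1) unfolding v_def by simp
  qed
  then show ?thesis by (simp add: v_def)
qed

lemma obsv_mat_dims[simp]:
  "dim_row (obsv_mat C M N) = N * dim_row C" "dim_col (obsv_mat C M N) = dim_col C"
  unfolding obsv_mat_def by auto

lemma index_obsv_mat_mult_vec: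
  assumes C: "C \<in> carrier_mat p q" and M: "M \<in> carrier_mat q q" and x: "x \<in> carrier_vec q"
    and r: "r < N*p"
  shows "(obsv_mat C M N *\<^sub>v x) $ r = (C *\<^sub>v (M ^\<^sub>m (r div p) *\<^sub>v x)) $ (r mod p)"
proof -
  have p: "p > 0" using r by (cases p) auto
  have "(obsv_mat C M N *\<^sub>v x) $ r = (\<Sum>s<q. obsv_mat C M N $$ (r,s) * x $ s)"
    using C x r by (intro index_mult_mat_vec_sum[of _ "N*p" q] carrier_matI) auto
  also have "\<dots> = (\<Sum>s<q. (C * M ^\<^sub>m (r div p)) $$ (r mod p, s) * x $ s)"
    using C r by (intro sum.cong refl) (auto simp: obsv_mat_def)
  also have "\<dots> = ((C * M ^\<^sub>m (r div p)) *\<^sub>v x) $ (r mod p)"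
    using C M x p by (intro index_mult_mat_vec_sum[symmetric, of _ p q]) auto
  finally show ?thesis using C M x by (simp add: assoc_mult_mat_vec[of _ p q _ q])
qed

lemma mat_ker_obsv_mat_iff:
  fixes C M :: "real mat"
  assumes C: "C \<in> carrier_mat p N" and M: "M \<in> carrier_mat N N" and x: "x \<in> carrier_vec N"
  shows "x \<in> mat_ker (obsv_mat C M N) \<longleftrightarrow> (\<forall>j. C *\<^sub>v (M ^\<^sub>m j *\<^sub>v x) = 0\<^sub>v p)"
proof
  assume "x \<in> mat_ker (obsv_mat C M N)"
  then have h: "\<forall>r<N*p. (obsv_mat C M N *\<^sub>v x) $ r = 0"
    unfolding mat_ker_def using C by (auto simp: vec_eq_iff)
  have "C *\<^sub>v (M ^\<^sub>m j *\<^sub>v x) = 0\<^sub>v p" if j: "j < N" for j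
  proof (rule eq_vecI)
    fix i assume "i < dim_vec (0\<^sub>v p :: real vec)"
    then have i: "i < p" by simp
    have "j*p + i < Suc j * p" using i by simp
    also have "\<dots> \<le> N * p" using j by (intro mult_right_mono) auto
    finally have jp: "j*p + i < N*p" .
    then have "(obsv_mat C M N *\<^sub>v x) $ (j*p + i) = 0" using h by blast
    then show "(C *\<^sub>v (M ^\<^sub>m j *\<^sub>v x)) $ i = 0\<^sub>v p $ i"
      using index_obsv_mat_mult_vec[OF C M x jp] i by simp
  qed (use C in auto)
  then show "\<forall>j. C *\<^sub>v (M ^\<^sub>m j *\<^sub>v x) = 0\<^sub>v p"
    using output_vanishing_all_powers[OF M C x] by blast
next
  assume h: "\<forall>j. C *\<^sub>v (M ^\<^sub>m j *\<^sub>v x) = 0\<^sub>v p"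
  have "(obsv_mat C M N *\<^sub>v x) $ r = 0" if r: "r < N*p" for r
  proof -
    have "p > 0" using r by (cases p) auto
    then show ?thesis using index_obsv_mat_mult_vec[OF C M x r] h by simp
  qed
  then show "x \<in> mat_ker (obsv_mat C M N)"
    unfolding mat_ker_def using C x by (auto simp: vec_eq_iff)
qed

lemma feedback_pow_mat_mult_vec:
  assumes C: "C \<in> carrier_mat p q" and M: "M \<in> carrier_mat q q" and K: "K \<in> carrier_mat q p"
    and x: "x \<in> carrier_vec q" and h: "\<forall>j. C *\<^sub>v (M ^\<^sub>m j *\<^sub>v x) = 0\<^sub>v p"
  shows "(M + K * C) ^\<^sub>m j *\<^sub>v x = M ^\<^sub>m j *\<^sub>v x"
proof (induct j)
  case 0 then show ?case using M K x by simp
next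
  case (Suc j)
  have MK: "M + K * C \<in> carrier_mat q q" using M K C by auto
  have y: "M ^\<^sub>m j *\<^sub>v x \<in> carrier_vec q" using M x by (auto intro!: mult_mat_vec_carrier[of _ q q])
  have "(M + K * C) ^\<^sub>m Suc j *\<^sub>v x = (M + K * C) *\<^sub>v (M ^\<^sub>m j *\<^sub>v x)"
    using Suc pow_mat_Suc_mult_vec[OF MK x] by simp
  also have "\<dots> = M *\<^sub>v (M ^\<^sub>m j *\<^sub>v x) + K *\<^sub>v (C *\<^sub>v (M ^\<^sub>m j *\<^sub>v x))"
    using add_mult_distrib_mat_vec[OF M _ y] assoc_mult_mat_vec[OF K C y] K C by simp
  also have "\<dots> = M *\<^sub>v (M ^\<^sub>m j *\<^sub>v x)"
    using h K mult_mat_vec_carrier[OF M y] by simp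
  also have "\<dots> = M ^\<^sub>m Suc j *\<^sub>v x" by (rule pow_mat_Suc_mult_vec[OF M x, symmetric])
  finally show ?case .
qed

lemma output_vanishing_feedback:
  assumes C: "C \<in> carrier_mat p q" and M: "M \<in> carrier_mat q q" and K: "K \<in> carrier_mat q p"
    and x: "x \<in> carrier_vec q" and h: "\<forall>j. C *\<^sub>v (M ^\<^sub>m j *\<^sub>v x) = 0\<^sub>v p"
  shows "\<forall>j. C *\<^sub>v ((M + K * C) ^\<^sub>m j *\<^sub>v x) = 0\<^sub>v p"
  using feedback_pow_mat_mult_vec[OF assms] h by simp

definition vec_block :: "nat \<Rightarrow> 'a vec \<Rightarrow> nat \<Rightarrow> 'a vec" where
  "vec_block p w j = vec p (\<lambda>r. w $ (j*p + r))"

lemma vec_block_carrier[simp]: "vec_block p w j \<in> carrier_vec p"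
  by (simp add: vec_block_def)

lemma transpose_obsv_mat_mult_vec:
  fixes C M :: "real mat"
  assumes C: "C \<in> carrier_mat p q" and M: "M \<in> carrier_mat q q" and w: "w \<in> carrier_vec (N*p)"
  shows "transpose_mat (obsv_mat C M N) *\<^sub>v w
       = vec q (\<lambda>i. \<Sum>j<N. (transpose_mat (C * M ^\<^sub>m j) *\<^sub>v vec_block p w j) $ i)"
proof (rule eq_vecI)
  fix i assume "i < dim_vec (vec q (\<lambda>i. \<Sum>j<N. (transpose_mat (C * M ^\<^sub>m j) *\<^sub>v vec_block p w j) $ i))"
  then have i: "i < q" by simp
  have OT: "transpose_mat (obsv_mat C M N) \<in> carrier_mat q (N*p)" using C by auto
  have CMj: "transpose_mat (C * M ^\<^sub>m j) \<in> carrier_mat q p" for j using C M by auto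
  have "(transpose_mat (obsv_mat C M N) *\<^sub>v w) $ i
      = (\<Sum>c<N*p. transpose_mat (obsv_mat C M N) $$ (i,c) * w $ c)"
    by (rule index_mult_mat_vec_sum[OF OT w i])
  also have "\<dots> = (\<Sum>c<N*p. (C * M ^\<^sub>m (c div p)) $$ (c mod p, i) * vec_block p w (c div p) $ (c mod p))"
  proof (intro sum.cong refl)
    fix c assume c: "c \<in> {..<N*p}"
    then have "p > 0" by (cases p) auto
    then show "transpose_mat (obsv_mat C M N) $$ (i,c) * w $ c
        = (C * M ^\<^sub>m (c div p)) $$ (c mod p, i) * vec_block p w (c div p) $ (c mod p)"
      using c i C by (simp add: obsv_mat_def vec_block_def)
  qed
  also have "\<dots> = (\<Sum>j<N. \<Sum>r<p. (C * M ^\<^sub>m j) $$ (r, i) * vec_block p w j $ r)"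
    by (rule sum_lessThan_mult_div_mod)
  also have "\<dots> = (\<Sum>j<N. (transpose_mat (C * M ^\<^sub>m j) *\<^sub>v vec_block p w j) $ i)"
  proof (intro sum.cong refl)
    fix j
    have "(transpose_mat (C * M ^\<^sub>m j) *\<^sub>v vec_block p w j) $ i
        = (\<Sum>r<p. transpose_mat (C * M ^\<^sub>m j) $$ (i,r) * vec_block p w j $ r)"
      by (rule index_mult_mat_vec_sum[OF CMj _ i]) (simp add: vec_block_def)
    also have "\<dots> = (\<Sum>r<p. (C * M ^\<^sub>m j) $$ (r,i) * vec_block p w j $ r)"
      using i C M by (intro sum.cong refl) simp
    finally show "(\<Sum>r<p. (C * M ^\<^sub>m j) $$ (r, i) * vec_block p w j $ r)
        = (transpose_mat (C * M ^\<^sub>m j) *\<^sub>v vec_block p w j) $ i" by simp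
  qed
  finally show "(transpose_mat (obsv_mat C M N) *\<^sub>v w) $ i
      = vec q (\<lambda>i. \<Sum>j<N. (transpose_mat (C * M ^\<^sub>m j) *\<^sub>v vec_block p w j) $ i) $ i"
    using i by simp
qed (use C in auto)

lemma pow_mat_similar:
  assumes H: "H \<in> carrier_mat N N" and V: "V \<in> carrier_mat N N" and W: "W \<in> carrier_mat N N"
    and WV: "W * V = 1\<^sub>m N"
  shows "W * (V * H * W) ^\<^sub>m j = H ^\<^sub>m j * W"
proof (induct j)
  case 0 then show ?case using W V H by simp
next
  case (Suc j)
  have VHW: "V * H * W \<in> carrier_mat N N" using V H W by auto
  have "W * (V * H * W) ^\<^sub>m Suc j = (W * (V * H * W) ^\<^sub>m j) * (V * H * W)"
    by (simp, rule assoc_mult_mat[symmetric, OF W pow_carrier_mat[OF VHW] VHW])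
  also have "\<dots> = H ^\<^sub>m j * ((W * V) * H * W)"
    using Suc H V W by (simp add: assoc_mult_mat_dims)
  also have "\<dots> = H ^\<^sub>m Suc j * W" using WV H W by (simp add: assoc_mult_mat_dims)
  finally show ?case .
qed

lemma obsv_mat_similar:
  assumes C: "C \<in> carrier_mat p N" and H: "H \<in> carrier_mat N N" and V: "V \<in> carrier_mat N N"
    and W: "W \<in> carrier_mat N N" and WV: "W * V = 1\<^sub>m N"
  shows "obsv_mat (C * W) (V * H * W) M = obsv_mat C H M * W"
proof (rule eq_matI)
  have O: "obsv_mat C H M \<in> carrier_mat (M * p) N" using C by (intro carrier_matI) auto
  fix r c assume "r < dim_row (obsv_mat C H M * W)" and "c < dim_col (obsv_mat C H M * W)"
  then have r: "r < M * p" and c: "c < N" using C W by auto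
  have "p > 0" using r by (cases p) auto
  have "(C * W) * (V * H * W) ^\<^sub>m (r div p) = C * (W * (V * H * W) ^\<^sub>m (r div p))"
    using C W V H by (intro assoc_mult_mat) auto
  also have "\<dots> = (C * H ^\<^sub>m (r div p)) * W"
    using pow_mat_similar[OF H V W WV] C H W by (simp add: assoc_mult_mat[of _ p N _ N _ N])
  finally have eq: "(C * W) * (V * H * W) ^\<^sub>m (r div p) = (C * H ^\<^sub>m (r div p)) * W" .
  have "obsv_mat (C * W) (V * H * W) M $$ (r,c) = ((C * H ^\<^sub>m (r div p)) * W) $$ (r mod p, c)"
    using r c C W by (simp add: obsv_mat_def eq)
  also have "\<dots> = (\<Sum>t<N. (C * H ^\<^sub>m (r div p)) $$ (r mod p, t) * W $$ (t, c))"
    using \<open>p > 0\<close> C H W c by (intro index_mult_mat_sum) auto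
  also have "\<dots> = (\<Sum>t<N. obsv_mat C H M $$ (r, t) * W $$ (t, c))"
    using r C by (intro sum.cong refl) (simp add: obsv_mat_def)
  also have "\<dots> = (obsv_mat C H M * W) $$ (r,c)"
    by (rule index_mult_mat_sum[symmetric, OF O W r c])
  finally show "obsv_mat (C * W) (V * H * W) M $$ (r,c) = (obsv_mat C H M * W) $$ (r,c)" .
qed (use C W in auto)

section \<open>Controllability\<close>

definition krylov_space :: "real mat \<Rightarrow> real mat \<Rightarrow> nat \<Rightarrow> real vec set" where
  "krylov_space A B d = {vec (dim_row B) (\<lambda>t. \<Sum>i<d. ((A ^\<^sub>m i * B) *\<^sub>v z i) $ t)
     | z. \<forall>i. z i \<in> carrier_vec (dim_col B)}"

context
  fixes A B :: "real mat" and q p :: nat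
  assumes A: "A \<in> carrier_mat q q" and B: "B \<in> carrier_mat q p"
begin

lemma krylov_space_subset_ctrb: "krylov_space A B N \<subseteq> mat_image (ctrb_mat A B N)"
proof
  fix x assume "x \<in> krylov_space A B N"
  then obtain z where z: "\<forall>i. z i \<in> carrier_vec p" and x: "x = vec q (\<lambda>t. \<Sum>i<N. ((A ^\<^sub>m i * B) *\<^sub>v z i) $ t)"
    unfolding krylov_space_def using B by auto
  define w where "w = vec (N*p) (\<lambda>c. z (c div p) $ (c mod p))"
  have cd: "dim_row (ctrb_mat A B N) = q" "dim_col (ctrb_mat A B N) = N*p"
    using B by (auto simp: ctrb_mat_def)
  have "ctrb_mat A B N *\<^sub>v w = x"
  proof (rule eq_vecI)
    fix t assume "t < dim_vec x"
    then have t: "t < q" using x by simp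
    have "(ctrb_mat A B N *\<^sub>v w) $ t = (\<Sum>c<N*p. ctrb_mat A B N $$ (t,c) * w $ c)"
      using cd t by (intro index_mult_mat_vec_sum[of _ q "N*p"] carrier_matI) (auto simp: w_def)
    also have "\<dots> = (\<Sum>c<N*p. (A ^\<^sub>m (c div p) * B) $$ (t, c mod p) * z (c div p) $ (c mod p))"
      using t B by (intro sum.cong refl) (auto simp: ctrb_mat_def w_def)
    also have "\<dots> = (\<Sum>j<N. \<Sum>r<p. (A ^\<^sub>m j * B) $$ (t, r) * z j $ r)"
      by (rule sum_lessThan_mult_div_mod)
    also have "\<dots> = x $ t"
      using x t A B z by (auto intro!: sum.cong simp del: index_mult_mat_vec, subst index_mult_mat_vec_sum[of _ q p], auto)
    finally show "(ctrb_mat A B N *\<^sub>v w) $ t = x $ t" .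
  qed (use cd x in auto)
  then show "x \<in> mat_image (ctrb_mat A B N)"
    unfolding mat_image_def using cd by (auto simp: w_def)
qed

lemma krylov_spaceI:
  "(\<forall>i. z i \<in> carrier_vec p) \<Longrightarrow>
   vec q (\<lambda>t. \<Sum>i<d. ((A ^\<^sub>m i * B) *\<^sub>v z i) $ t) \<in> krylov_space A B d"
  unfolding krylov_space_def using B by auto

lemma krylov_spaceE:
  "x \<in> krylov_space A B d \<Longrightarrow>
   \<exists>z. (\<forall>i. z i \<in> carrier_vec p) \<and> x = vec q (\<lambda>t. \<Sum>i<d. ((A ^\<^sub>m i * B) *\<^sub>v z i) $ t)"
  unfolding krylov_space_def using B by auto

lemma krylov_space_carrier: "x \<in> krylov_space A B d \<Longrightarrow> x \<in> carrier_vec q"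
  using krylov_spaceE by fastforce

lemma krylov_space_zero: "0\<^sub>v q \<in> krylov_space A B d"
proof -
  have AB: "\<And>i. A ^\<^sub>m i * B \<in> carrier_mat q p" using A B by auto
  have "vec q (\<lambda>t. \<Sum>i<d. ((A ^\<^sub>m i * B) *\<^sub>v (0\<^sub>v p)) $ t) = 0\<^sub>v q"
    using AB by (intro eq_vecI) (auto simp: mult_mat_zero_vec[OF AB])
  then show ?thesis using krylov_spaceI[of "\<lambda>_. 0\<^sub>v p" d] by auto
qed

lemma krylov_space_add:
  "x \<in> krylov_space A B d \<Longrightarrow> y \<in> krylov_space A B d \<Longrightarrow> x + y \<in> krylov_space A B d"
proof -
  assume xk: "x \<in> krylov_space A B d" and yk: "y \<in> krylov_space A B d"
  obtain z where z: "\<forall>i. z i \<in> carrier_vec p" "x = vec q (\<lambda>t. \<Sum>i<d. ((A ^\<^sub>m i * B) *\<^sub>v z i) $ t)"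
    using krylov_spaceE[OF xk] by blast
  obtain z' where z': "\<forall>i. z' i \<in> carrier_vec p" "y = vec q (\<lambda>t. \<Sum>i<d. ((A ^\<^sub>m i * B) *\<^sub>v z' i) $ t)"
    using krylov_spaceE[OF yk] by blast
  have "x + y = vec q (\<lambda>t. \<Sum>i<d. ((A ^\<^sub>m i * B) *\<^sub>v (z i + z' i)) $ t)"
  proof (rule eq_vecI)
    fix t assume "t < dim_vec (vec q (\<lambda>t. \<Sum>i<d. ((A ^\<^sub>m i * B) *\<^sub>v (z i + z' i)) $ t))"
    then have t: "t < q" by simp
    have AB: "A ^\<^sub>m i * B \<in> carrier_mat q p" for i using A B by auto
    show "(x + y) $ t = vec q (\<lambda>t. \<Sum>i<d. ((A ^\<^sub>m i * B) *\<^sub>v (z i + z' i)) $ t) $ t"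
      using t z z' by (simp add: index_mult_mat_vec_add[OF AB] sum.distrib del: index_mult_mat_vec)
  qed (use z z' in auto)
  moreover have "\<forall>i. z i + z' i \<in> carrier_vec p" using z z' by auto
  ultimately show ?thesis using krylov_spaceI by auto
qed

lemma krylov_space_smult: "x \<in> krylov_space A B d \<Longrightarrow> c \<cdot>\<^sub>v x \<in> krylov_space A B d"
proof -
  assume xk: "x \<in> krylov_space A B d"
  obtain z where z: "\<forall>i. z i \<in> carrier_vec p" "x = vec q (\<lambda>t. \<Sum>i<d. ((A ^\<^sub>m i * B) *\<^sub>v z i) $ t)"
    using krylov_spaceE[OF xk] by blast
  have "c \<cdot>\<^sub>v x = vec q (\<lambda>t. \<Sum>i<d. ((A ^\<^sub>m i * B) *\<^sub>v (c \<cdot>\<^sub>v z i)) $ t)"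
  proof (rule eq_vecI)
    fix t assume "t < dim_vec (vec q (\<lambda>t. \<Sum>i<d. ((A ^\<^sub>m i * B) *\<^sub>v (c \<cdot>\<^sub>v z i)) $ t))"
    then have t: "t < q" by simp
    have AB: "A ^\<^sub>m i * B \<in> carrier_mat q p" for i using A B by auto
    show "(c \<cdot>\<^sub>v x) $ t = vec q (\<lambda>t. \<Sum>i<d. ((A ^\<^sub>m i * B) *\<^sub>v (c \<cdot>\<^sub>v z i)) $ t) $ t"
      using t z AB by (simp add: index_mult_mat_vec_smult[OF AB] sum_distrib_left del: index_mult_mat_vec)
  qed (use z in auto)
  moreover have "\<forall>i. c \<cdot>\<^sub>v z i \<in> carrier_vec p" using z by auto
  ultimately show ?thesis using krylov_spaceI by auto
qed

lemma krylov_space_mono: "d \<le> d' \<Longrightarrow> x \<in> krylov_space A B d \<Longrightarrow> x \<in> krylov_space A B d'"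
proof -
  assume dd: "d \<le> d'" and xk: "x \<in> krylov_space A B d"
  obtain z where z: "\<forall>i. z i \<in> carrier_vec p" "x = vec q (\<lambda>t. \<Sum>i<d. ((A ^\<^sub>m i * B) *\<^sub>v z i) $ t)"
    using krylov_spaceE[OF xk] by blast
  define z' where "z' i = (if i < d then z i else 0\<^sub>v p)" for i
  have z'c: "\<forall>i. z' i \<in> carrier_vec p" using z by (auto simp: z'_def)
  have "x = vec q (\<lambda>t. \<Sum>i<d'. ((A ^\<^sub>m i * B) *\<^sub>v z' i) $ t)"
  proof (rule eq_vecI)
    fix t assume "t < dim_vec (vec q (\<lambda>t. \<Sum>i<d'. ((A ^\<^sub>m i * B) *\<^sub>v z' i) $ t))"
    then have t: "t < q" by simp
    have AB: "A ^\<^sub>m i * B \<in> carrier_mat q p" for i using A B by auto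
    have "(\<Sum>i<d'. ((A ^\<^sub>m i * B) *\<^sub>v z' i) $ t) = (\<Sum>i<d. ((A ^\<^sub>m i * B) *\<^sub>v z' i) $ t)"
      using dd t AB by (intro sum.mono_neutral_right) (auto simp: z'_def mult_mat_zero_vec[OF AB])
    also have "\<dots> = (\<Sum>i<d. ((A ^\<^sub>m i * B) *\<^sub>v z i) $ t)"
      by (intro sum.cong) (auto simp: z'_def)
    finally show "x $ t = vec q (\<lambda>t. \<Sum>i<d'. ((A ^\<^sub>m i * B) *\<^sub>v z' i) $ t) $ t"
      using z t by simp
  qed (use z in auto)
  then show ?thesis using krylov_spaceI[OF z'c] by auto
qed

lemma krylov_space_input: "y \<in> carrier_vec p \<Longrightarrow> B *\<^sub>v y \<in> krylov_space A B 1"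
proof -
  assume y: "y \<in> carrier_vec p"
  have "B *\<^sub>v y = vec q (\<lambda>t. \<Sum>i<1. ((A ^\<^sub>m i * B) *\<^sub>v (\<lambda>_. y) i) $ t)"
    using A B y by (intro eq_vecI) auto
  moreover have "vec q (\<lambda>t. \<Sum>i<1. ((A ^\<^sub>m i * B) *\<^sub>v (\<lambda>_. y) i) $ t) \<in> krylov_space A B 1"
    by (rule krylov_spaceI) (use y in auto)
  ultimately show ?thesis by (simp only:)
qed

lemma krylov_space_mult: "x \<in> krylov_space A B d \<Longrightarrow> A *\<^sub>v x \<in> krylov_space A B (Suc d)"
proof -
  assume xk: "x \<in> krylov_space A B d"
  obtain z where z: "\<forall>i. z i \<in> carrier_vec p" "x = vec q (\<lambda>t. \<Sum>i<d. ((A ^\<^sub>m i * B) *\<^sub>v z i) $ t)"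
    using krylov_spaceE[OF xk] by blast
  have AB: "A ^\<^sub>m i * B \<in> carrier_mat q p" for i using A B by auto
  have ABz: "\<forall>i\<in>{..<d}. (A ^\<^sub>m i * B) *\<^sub>v z i \<in> carrier_vec q" using AB z by (auto intro: mult_mat_vec_carrier)
  define z' where "z' i = (if i = 0 then 0\<^sub>v p else z (i - 1))" for i
  have z'c: "\<forall>i. z' i \<in> carrier_vec p" using z by (auto simp: z'_def)
  have step: "A *\<^sub>v ((A ^\<^sub>m i * B) *\<^sub>v z i) = (A ^\<^sub>m Suc i * B) *\<^sub>v z i" for i
  proof -
    have "A *\<^sub>v ((A ^\<^sub>m i * B) *\<^sub>v z i) = (A * (A ^\<^sub>m i * B)) *\<^sub>v z i"
      using A AB z by (intro assoc_mult_mat_vec[symmetric, of _ q q _ p]) auto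
    also have "A * (A ^\<^sub>m i * B) = A ^\<^sub>m Suc i * B"
      unfolding pow_mat_Suc_left[OF A] using A B by (intro assoc_mult_mat[symmetric, of _ q q _ q _ p]) auto
    finally show ?thesis .
  qed
  have "A *\<^sub>v x = vec q (\<lambda>t. \<Sum>i<d. (A *\<^sub>v ((A ^\<^sub>m i * B) *\<^sub>v z i)) $ t)"
    unfolding z(2) by (rule mult_mat_vec_vec_sum[OF A ABz])
  also have "\<dots> = vec q (\<lambda>t. \<Sum>i<Suc d. ((A ^\<^sub>m i * B) *\<^sub>v z' i) $ t)"
  proof (rule eq_vecI)
    fix t assume "t < dim_vec (vec q (\<lambda>t. \<Sum>i<Suc d. ((A ^\<^sub>m i * B) *\<^sub>v z' i) $ t))"
    then have t: "t < q" by simp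
    have "(\<Sum>i<Suc d. ((A ^\<^sub>m i * B) *\<^sub>v z' i) $ t) = ((A ^\<^sub>m 0 * B) *\<^sub>v z' 0) $ t + (\<Sum>i<d. ((A ^\<^sub>m Suc i * B) *\<^sub>v z' (Suc i)) $ t)"
      by (rule sum.lessThan_Suc_shift)
    also have "((A ^\<^sub>m 0 * B) *\<^sub>v z' 0) $ t = 0" using t AB[of 0] by (simp add: z'_def)
    also have "(\<Sum>i<d. ((A ^\<^sub>m Suc i * B) *\<^sub>v z' (Suc i)) $ t) = (\<Sum>i<d. (A *\<^sub>v ((A ^\<^sub>m i * B) *\<^sub>v z i)) $ t)"
      by (intro sum.cong refl) (simp add: step z'_def)
    finally show "vec q (\<lambda>t. \<Sum>i<d. (A *\<^sub>v ((A ^\<^sub>m i * B) *\<^sub>v z i)) $ t) $ t = vec q (\<lambda>t. \<Sum>i<Suc d. ((A ^\<^sub>m i * B) *\<^sub>v z' i) $ t) $ t"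
      using t by simp
  qed simp
  finally have e: "A *\<^sub>v x = vec q (\<lambda>t. \<Sum>i<Suc d. ((A ^\<^sub>m i * B) *\<^sub>v z' i) $ t)" .
  show ?thesis unfolding e by (rule krylov_spaceI[OF z'c])
qed

lemma krylov_space_sum:
  "finite F \<Longrightarrow> \<forall>j\<in>F. f j \<in> krylov_space A B d \<Longrightarrow>
   vec q (\<lambda>t. \<Sum>j\<in>F. f j $ t) \<in> krylov_space A B d"
proof (induct F rule: finite_induct)
  case empty
  have "vec q (\<lambda>t. \<Sum>j\<in>{}. f j $ t) = 0\<^sub>v q" by (intro eq_vecI) auto
  then show ?case using krylov_space_zero by simp
next
  case (insert a F)
  have fa: "f a \<in> krylov_space A B d" and IH: "vec q (\<lambda>t. \<Sum>j\<in>F. f j $ t) \<in> krylov_space A B d" using insert by auto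
  have "vec q (\<lambda>t. \<Sum>j\<in>insert a F. f j $ t) = f a + vec q (\<lambda>t. \<Sum>j\<in>F. f j $ t)"
    using krylov_space_carrier[OF fa] insert(1,2) by (intro eq_vecI) auto
  then show ?case using krylov_space_add[OF fa IH] by simp
qed

lemma mat_image_ctrb_index_zero:
  assumes h: "\<forall>j c. c < p \<longrightarrow> (A ^\<^sub>m j * B) $$ (i, c) = 0" and i: "i < q"
    and y: "y \<in> mat_image (ctrb_mat A B N)"
  shows "y $ i = 0"
proof -
  obtain u where u: "u \<in> carrier_vec (N * p)" and yu: "y = ctrb_mat A B N *\<^sub>v u"
    using y B unfolding mat_image_def ctrb_mat_def by auto
  have cd: "ctrb_mat A B N \<in> carrier_mat q (N*p)" using B by (auto simp: ctrb_mat_def intro!: carrier_matI)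
  have "y $ i = (\<Sum>c<N*p. ctrb_mat A B N $$ (i,c) * u $ c)"
    unfolding yu by (rule index_mult_mat_vec_sum[OF cd u i])
  also have "\<dots> = 0"
  proof (intro sum.neutral ballI)
    fix c assume c: "c \<in> {..<N*p}"
    then have p: "p > 0" by (cases p) auto
    have "ctrb_mat A B N $$ (i,c) = (A ^\<^sub>m (c div p) * B) $$ (i, c mod p)"
      using i c B by (auto simp: ctrb_mat_def)
    also have "\<dots> = 0" using h p by simp
    finally show "ctrb_mat A B N $$ (i,c) * u $ c = 0" by simp
  qed
  finally show ?thesis .
qed

lemma krylov_space_feedback_pow:
  assumes F: "F \<in> carrier_mat p q" and y: "y \<in> carrier_vec p"
  shows "(A + B * F) ^\<^sub>m j *\<^sub>v (B *\<^sub>v y) \<in> krylov_space A B (Suc j)"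
proof (induct j)
  case 0
  have "(A + B * F) ^\<^sub>m 0 *\<^sub>v (B *\<^sub>v y) = B *\<^sub>v y" using A B y by (simp add: mult_mat_vec_carrier)
  then show ?case using krylov_space_input[OF y] by simp
next
  case (Suc j)
  let ?x = "(A + B * F) ^\<^sub>m j *\<^sub>v (B *\<^sub>v y)"
  have ABF: "A + B * F \<in> carrier_mat q q" using A B F by auto
  have By: "B *\<^sub>v y \<in> carrier_vec q" by (rule mult_mat_vec_carrier[OF B y])
  have x: "?x \<in> carrier_vec q" by (rule mult_mat_vec_carrier[OF pow_carrier_mat[OF ABF] By])
  have "(A + B * F) ^\<^sub>m Suc j *\<^sub>v (B *\<^sub>v y) = (A + B * F) *\<^sub>v ?x"
    by (rule pow_mat_Suc_mult_vec[OF ABF By])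
  also have "\<dots> = A *\<^sub>v ?x + B *\<^sub>v (F *\<^sub>v ?x)"
    by (simp only: add_mult_distrib_mat_vec[OF A mult_carrier_mat[OF B F] x] assoc_mult_mat_vec[OF B F x])
  also have "\<dots> \<in> krylov_space A B (Suc (Suc j))"
  proof (rule krylov_space_add)
    show "A *\<^sub>v ?x \<in> krylov_space A B (Suc (Suc j))" by (rule krylov_space_mult[OF Suc])
    have "B *\<^sub>v (F *\<^sub>v ?x) \<in> krylov_space A B 1" by (rule krylov_space_input) (use F x in auto)
    then show "B *\<^sub>v (F *\<^sub>v ?x) \<in> krylov_space A B (Suc (Suc j))" by (rule krylov_space_mono[rotated]) simp
  qed
  finally show ?case .
qed

end

lemma blk_add_half: "i < n \<Longrightarrow> blk n k l (i+n) = blk n k l i + 3"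
  unfolding blk_def Let_def by auto

lemma blk_sub_half: "n \<le> i \<Longrightarrow> i < 2*n \<Longrightarrow> blk n k l (i-n) + 3 = blk n k l i"
  unfolding blk_def Let_def by auto

lemma blk_cases: "blk n k l i \<in> {0,1,2,3,4,5}"
  unfolding blk_def Let_def by auto

lemma blk_less_3_iff: "i < n \<Longrightarrow> blk n k l i < 3" "n \<le> i \<Longrightarrow> blk n k l i \<ge> 3"
  unfolding blk_def Let_def by auto

lemma blk_observed_cases:
  "blk n k l t \<in> {0,1,3} \<Longrightarrow> t < k \<or> (k \<le> t \<and> t < k + l) \<or> (n \<le> t \<and> t < n + k)"
  unfolding blk_def Let_def by (auto split: if_splits)

lemma index_blockE_mult_vec:
  assumes x: "x \<in> carrier_vec (2*n)" and r: "r < Nr" and kl: "k + l \<le> n"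
  shows "(blockE Nr n k l a b c *\<^sub>v x) $ r =
    (if r < k then a r * x$r else if r < k+l then b (r-k) * x$r
     else if r < 2*k+l then c (r-(k+l)) * x$(n+(r-(k+l))) else 0)"
proof -
  let ?E = "blockE Nr n k l a b c"
  let ?t = "if r < k+l then r else n + (r - (k+l))"
  let ?co = "if r < k then a r else if r < k+l then b (r-k) else if r < 2*k+l then c (r-(k+l)) else 0"
  have "(?E *\<^sub>v x) $ r = (\<Sum>j<2*n. ?E $$ (r,j) * x$j)"
    using x r by (auto simp: blockE_def scalar_prod_def lessThan_atLeast0 intro!: sum.cong)
  also have "\<dots> = (\<Sum>j<2*n. if j = ?t then ?co * x$j else 0)"
    using r kl by (intro sum.cong refl) (auto simp: blockE_def)
  also have "\<dots> = (if ?t < 2*n then ?co * x$?t else 0)"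
    by (subst sum.delta) auto
  also have "\<dots> = (if r < k then a r * x$r else if r < k+l then b (r-k) * x$r
     else if r < 2*k+l then c (r-(k+l)) * x$(n+(r-(k+l))) else 0)"
    using kl by auto
  finally show ?thesis .
qed

section \<open>Systems whose observability matrix has the block pattern\<close>

locale obsv_block_factorization =
  fixes n m k l :: nat and R C Sg P L :: "real mat" and a b c :: "nat \<Rightarrow> real"
  assumes n1: "n \<ge> 1" and m1: "m \<ge> 1"
    and R: "R \<in> carrier_mat (2*n) (2*n)" and R_sym: "transpose_mat R = R"
    and C: "C \<in> carrier_mat (2*m) (2*n)"
    and Sg: "Sg \<in> carrier_mat (2*m) (2*m)" and Sg_sharp: "Sg * sharp Sg = 1\<^sub>m (2*m)"
    and kl: "k + l \<le> n"
    and P: "P \<in> carrier_mat (4*n*m) (4*n*m)" and L: "L \<in> carrier_mat (4*n*m) (4*n*m)"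
    and LP: "L * P = 1\<^sub>m (4*n*m)"
    and obsv: "obsv_mat C (Jmat n * R) (2*n) = P * blockE (4*n*m) n k l a b c"
    and a: "\<forall>i<k. a i \<noteq> 0" and b: "\<forall>i<l. b i \<noteq> 0" and c: "\<forall>i<k. c i \<noteq> 0"
begin

abbreviation "N \<equiv> 2*n"
abbreviation "p \<equiv> 2*m"
abbreviation "Nr \<equiv> 4*n*m"
definition "H = Jmat n * R"
definition "S = sharp C"
definition "Am = H - (1/2) \<cdot>\<^sub>m (S * C)"
definition "Bm = - (S * Sg)"
definition "E = blockE Nr n k l a b c"

lemma Nr_eq: "N * p = Nr" by simp

lemma Nr_ge: "2*k + l \<le> Nr"
proof -
  have "2*k+l \<le> 4*n" using kl by simp
  also have "4*n \<le> 4*n*m" using m1 by simp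
  finally show ?thesis .
qed

lemma H_carrier[simp]: "H \<in> carrier_mat N N" unfolding H_def by (rule mult_carrier_mat[OF Jmat_carrier R])
lemma S_carrier[simp]: "S \<in> carrier_mat N p" using C by (simp add: S_def)
lemma E_carrier[simp]: "E \<in> carrier_mat Nr N" by (simp add: E_def blockE_def)
lemma SC_carrier[simp]: "S * C \<in> carrier_mat N N" by (rule mult_carrier_mat[OF S_carrier C])
lemma Am_carrier[simp]: "Am \<in> carrier_mat N N" unfolding Am_def
  by (rule minus_carrier_mat[OF smult_carrier_mat[OF SC_carrier]])
lemma Bm_carrier[simp]: "Bm \<in> carrier_mat N p" unfolding Bm_def
  by (rule uminus_carrier_mat, rule mult_carrier_mat[OF S_carrier Sg])

definition "pivot_row t = (if t < n then t else k + l + (t - n))"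
definition "pivot t = (if t < k then a t else if t < n then b (t - k) else c (t - n))"

lemma pivot_row_less: assumes "t < N" "blk n k l t \<in> {0,1,3}" shows "pivot_row t < Nr"
proof -
  have "pivot_row t < 2*k + l" using blk_observed_cases[OF assms(2)] kl unfolding pivot_row_def by auto
  then show ?thesis using Nr_ge by linarith
qed

lemma pivot_nonzero: assumes "t < N" "blk n k l t \<in> {0,1,3}" shows "pivot t \<noteq> 0"
proof -
  consider (A) "t < k" | (B) "k \<le> t" "t < k + l" | (D) "n \<le> t" "t < n + k" using blk_observed_cases[OF assms(2)] by blast
  then show ?thesis
  proof cases
    case A then show ?thesis using a unfolding pivot_def by simp
  next
    case B then have "t < n" "t - k < l" using kl by auto
    then show ?thesis using B b unfolding pivot_def by simp
  next
    case D then have "\<not> t < k" "\<not> t < n" "t - n < k" using kl by auto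
    then show ?thesis using c unfolding pivot_def by simp
  qed
qed

lemma index_E_pivot_row: assumes t: "t < N" "blk n k l t \<in> {0,1,3}" and j: "j < N"
  shows "E $$ (pivot_row t, j) = (if j = t then pivot t else 0)"
proof -
  have r: "pivot_row t < Nr" by (rule pivot_row_less[OF t])
  have "E $$ (pivot_row t, j) = (if pivot_row t < k \<and> j = pivot_row t then a (pivot_row t)
     else if k \<le> pivot_row t \<and> pivot_row t < k + l \<and> j = pivot_row t then b (pivot_row t - k)
     else if k + l \<le> pivot_row t \<and> pivot_row t < 2*k + l \<and> j = n + (pivot_row t - (k + l)) then c (pivot_row t - (k + l))
     else 0)" unfolding E_def blockE_def using r j by simp
  also have "\<dots> = (if j = t then pivot t else 0)"
  proof -
    consider (A) "t < k" | (B) "k \<le> t" "t < k + l" | (D) "n \<le> t" "t < n + k" using blk_observed_cases[OF t(2)] by blast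
    then show ?thesis
    proof cases
      case A then have "pivot_row t = t" "pivot t = a t" "t < n" using kl unfolding pivot_row_def pivot_def by auto
      then show ?thesis using A by simp
    next
      case B then have "pivot_row t = t" "pivot t = b (t - k)" "t < n" using kl unfolding pivot_row_def pivot_def by auto
      then show ?thesis using B by simp
    next
      case D then have e: "pivot_row t = k + l + (t - n)" "pivot t = c (t - n)" using kl unfolding pivot_row_def pivot_def by auto
      have "\<not> pivot_row t < k" "\<not> pivot_row t < k + l" "k + l \<le> pivot_row t" "pivot_row t < 2*k + l" "n + (pivot_row t - (k + l)) = t" "pivot_row t - (k+l) = t - n"
        using D e by auto
      then show ?thesis using e by (simp only: if_False if_True simp_thms)
    qed
  qed
  finally show ?thesis .
qed

lemma index_E_mult_vec_pivot_row:
  assumes x: "x \<in> carrier_vec N" and t: "t < N" "blk n k l t \<in> {0,1,3}"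
  shows "(E *\<^sub>v x) $ pivot_row t = pivot t * x $ t"
proof -
  have "(E *\<^sub>v x) $ pivot_row t = (\<Sum>j<N. E $$ (pivot_row t, j) * x $ j)"
    by (rule index_mult_mat_vec_sum[OF E_carrier x pivot_row_less[OF t]])
  also have "\<dots> = (\<Sum>j<N. if j = t then pivot t * x $ j else 0)"
    using t by (intro sum.cong refl) (simp add: index_E_pivot_row)
  also have "\<dots> = pivot t * x $ t" using t by (simp add: sum.delta)
  finally show ?thesis .
qed

lemma blockE_mult_vec_eq_zero_iff:
  assumes x: "x \<in> carrier_vec N"
  shows "E *\<^sub>v x = 0\<^sub>v Nr \<longleftrightarrow> (\<forall>i<N. blk n k l i \<in> {0,1,3} \<longrightarrow> x $ i = 0)"
proof
  assume h: "E *\<^sub>v x = 0\<^sub>v Nr"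
  show "\<forall>i<N. blk n k l i \<in> {0,1,3} \<longrightarrow> x $ i = 0"
  proof (intro allI impI)
    fix i assume i: "i < N" "blk n k l i \<in> {0,1,3}"
    have "pivot i * x $ i = 0" using index_E_mult_vec_pivot_row[OF x i] h pivot_row_less[OF i] by simp
    then show "x $ i = 0" using pivot_nonzero[OF i] by simp
  qed
next
  assume h: "\<forall>i<N. blk n k l i \<in> {0,1,3} \<longrightarrow> x $ i = 0"
  show "E *\<^sub>v x = 0\<^sub>v Nr"
  proof (rule eq_vecI)
    fix r assume "r < dim_vec (0\<^sub>v Nr :: real vec)"
    then have r: "r < Nr" by simp
    have b0: "r < k \<Longrightarrow> x $ r = 0" using h kl unfolding blk_def Let_def by auto
    have b1: "k \<le> r \<Longrightarrow> r < k + l \<Longrightarrow> x $ r = 0" using h kl unfolding blk_def Let_def by auto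
    have b3: "k + l \<le> r \<Longrightarrow> r < 2*k+l \<Longrightarrow> x $ (n + (r - (k+l))) = 0"
      using h[rule_format, of "n + (r - (k+l))"] kl unfolding blk_def Let_def by auto
    show "(E *\<^sub>v x) $ r = 0\<^sub>v Nr $ r"
      using index_blockE_mult_vec[OF x r kl] b0 b1 b3 r unfolding E_def by auto
  qed (use x in \<open>auto simp: E_def blockE_def\<close>)
qed

text \<open>The left inverse \<open>L\<close> of \<open>P\<close> lets the kernel of the observability matrix be read off \<open>E\<close>.\<close>

lemma output_vanishing_H_iff:
  assumes x: "x \<in> carrier_vec N"
  shows "(\<forall>j. C *\<^sub>v (H ^\<^sub>m j *\<^sub>v x) = 0\<^sub>v p) \<longleftrightarrow> (\<forall>i<N. blk n k l i \<in> {0,1,3} \<longrightarrow> x $ i = 0)"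
proof -
  have "(\<forall>j. C *\<^sub>v (H ^\<^sub>m j *\<^sub>v x) = 0\<^sub>v p) \<longleftrightarrow> x \<in> mat_ker (obsv_mat C H N)"
    using mat_ker_obsv_mat_iff[OF C H_carrier x] by simp
  also have "\<dots> \<longleftrightarrow> P *\<^sub>v (E *\<^sub>v x) = 0\<^sub>v Nr"
    unfolding mat_ker_def using x obsv C P carrier_matD[OF E_carrier[unfolded E_def]]
    by (simp add: H_def E_def assoc_mult_mat_vec[OF P E_carrier[unfolded E_def] x])
  also have "\<dots> \<longleftrightarrow> E *\<^sub>v x = 0\<^sub>v Nr"
  proof
    assume h: "P *\<^sub>v (E *\<^sub>v x) = 0\<^sub>v Nr"
    have Ex: "E *\<^sub>v x \<in> carrier_vec Nr" using x by (auto intro: mult_mat_vec_carrier[OF E_carrier])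
    have "E *\<^sub>v x = (L * P) *\<^sub>v (E *\<^sub>v x)" using LP Ex by simp
    also have "\<dots> = 0\<^sub>v Nr" using h L P Ex by (simp add: assoc_mult_mat_vec[OF L P Ex])
    finally show "E *\<^sub>v x = 0\<^sub>v Nr" .
  qed (use P in simp)
  also have "\<dots> \<longleftrightarrow> (\<forall>i<N. blk n k l i \<in> {0,1,3} \<longrightarrow> x $ i = 0)"
    by (rule blockE_mult_vec_eq_zero_iff[OF x])
  finally show ?thesis .
qed

lemma unit_vec_output_vanishing:
  assumes "j < N" and "blk n k l j \<in> {2,4,5}"
  shows "\<forall>t. C *\<^sub>v (H ^\<^sub>m t *\<^sub>v unit_vec N j) = 0\<^sub>v p"
  using assms by (subst output_vanishing_H_iff) auto

lemma C_block_zero: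
  assumes i: "i < p" and j: "j < N" and bj: "blk n k l j \<in> {2,4,5}"
  shows "C $$ (i,j) = 0"
proof -
  have "C *\<^sub>v (H ^\<^sub>m 0 *\<^sub>v unit_vec N j) = 0\<^sub>v p" using unit_vec_output_vanishing[OF j bj] by blast
  then have "C *\<^sub>v unit_vec N j = 0\<^sub>v p" using carrier_matD[OF H_carrier] by simp
  then show ?thesis using index_mult_mat_unit_vec[OF C i j] i by simp
qed

text \<open>The unobservable coordinates span an \<open>H\<close>-invariant subspace.\<close>

lemma H_block_zero:
  assumes i: "i < N" and j: "j < N" and bi: "blk n k l i \<in> {0,1,3}" and bj: "blk n k l j \<in> {2,4,5}"
  shows "H $$ (i,j) = 0"
proof -
  have "\<forall>t. C *\<^sub>v (H ^\<^sub>m t *\<^sub>v (H *\<^sub>v unit_vec N j)) = 0\<^sub>v p"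
    using unit_vec_output_vanishing[OF j bj]
    by (metis pow_mat.simps(2) assoc_mult_mat_vec[OF pow_carrier_mat[OF H_carrier] H_carrier unit_vec_carrier])
  then have "(H *\<^sub>v unit_vec N j) $ i = 0"
    using output_vanishing_H_iff[OF mult_mat_vec_carrier[OF H_carrier unit_vec_carrier]] i bi by blast
  then show ?thesis using index_mult_mat_unit_vec[OF H_carrier i j] by simp
qed

lemma index_H: "i < N \<Longrightarrow> j < N \<Longrightarrow> H $$ (i,j) = (if i < n then R $$ (i+n,j) else - R $$ (i-n,j))"
  unfolding H_def by (rule index_Jmat_mult[OF R])

text \<open>Since \<open>H = J R\<close> with \<open>R\<close> symmetric, the zeros of \<open>H\<close> propagate to a symmetric
  pattern of zeros of \<open>R\<close>.\<close>

lemma R_block_zero: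
  assumes s: "s < N" and j: "j < N" and bs: "blk n k l s \<in> {0,3,4}" and bj: "blk n k l j \<in> {2,4,5}"
  shows "R $$ (s,j) = 0 \<and> R $$ (j,s) = 0"
proof -
  have "R $$ (s,j) = 0"
  proof (cases "s < n")
    case True
    then have "blk n k l (s+n) = 3"
      using bs blk_add_half[OF True] blk_less_3_iff(1)[OF True, of k l] by auto
    then have "H $$ (s+n, j) = 0" using H_block_zero[of "s+n" j] True j bj by auto
    then show ?thesis using index_H[of "s+n" j] True j by simp
  next
    case False
    then have "blk n k l (s-n) \<in> {0,1}" using bs blk_sub_half[of n s k l] s by auto
    then have "H $$ (s-n, j) = 0" using H_block_zero[of "s-n" j] False s j bj by auto
    moreover have "s - n < n" "s - n + n = s" "s - n < N" using False s by auto
    ultimately show ?thesis using index_H[of "s-n" j] j by simp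
  qed
  moreover have "R $$ (j,s) = R $$ (s,j)"
    using s j R by (metis R_sym carrier_matD index_transpose_mat(1))
  ultimately show ?thesis by simp
qed

lemma S_block_zero:
  assumes i: "i < N" and r: "r < p" and bi: "blk n k l i \<in> {1,2,5}"
  shows "S $$ (i,r) = 0"
proof -
  define Y where "Y = Jmat n * transpose_mat C"
  have CT: "transpose_mat C \<in> carrier_mat N p" using C by simp
  have Yc: "Y \<in> carrier_mat N p" unfolding Y_def using CT by auto
  have Yz: "Y $$ (i,r') = 0" if r': "r' < p" for r'
  proof -
    have "Y $$ (i,r') = (if i < n then transpose_mat C $$ (i+n, r') else - transpose_mat C $$ (i-n, r'))"
      unfolding Y_def by (rule index_Jmat_mult[OF CT i r'])
    also have "\<dots> = 0"
    proof (cases "i < n")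
      case True
      then have "blk n k l (i+n) \<in> {2,4,5}"
        using bi blk_add_half[OF True] blk_less_3_iff(1)[OF True, of k l] by auto
      then show ?thesis using True C r' C_block_zero[of r' "i+n"] by auto
    next
      case False
      then have "blk n k l (i-n) \<in> {2,4,5}" using bi blk_sub_half[of n i k l] i by auto
      then show ?thesis using False C r' i C_block_zero[of r' "i-n"] by auto
    qed
    finally show ?thesis .
  qed
  have "S = - (Y * Jmat m)" unfolding S_def Y_def by (rule sharp_carrier_eq[OF C])
  then have "S $$ (i,r) = - ((Y * Jmat m) $$ (i,r))" using i r Yc by simp
  also have "(Y * Jmat m) $$ (i,r) = (if r < m then - Y $$ (i, r+m) else Y $$ (i, r-m))"
    by (rule index_mult_Jmat[OF Yc i r])
  also have "\<dots> = 0" using Yz r by auto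
  finally show ?thesis by simp
qed

lemma SC_block_zero:
  assumes i: "i < N" and j: "j < N" and h: "blk n k l i \<in> {1,2,5} \<or> blk n k l j \<in> {2,4,5}"
  shows "(S * C) $$ (i,j) = 0"
proof -
  have "(S * C) $$ (i,j) = (\<Sum>t<p. S $$ (i,t) * C $$ (t,j))"
    by (rule index_mult_mat_sum[OF S_carrier C i j])
  also have "\<dots> = 0" using h S_block_zero[OF i] C_block_zero[OF _ j] by (auto intro!: sum.neutral)
  finally show ?thesis .
qed

lemma Am_block_zero:
  assumes i: "i < N" and j: "j < N" and z: "Ahat_zero (blk n k l i) (blk n k l j)"
  shows "Am $$ (i,j) = 0"
proof -
  have "blk n k l i \<in> {1,2,5} \<or> blk n k l j \<in> {2,4,5}" using z unfolding Ahat_zero_def by auto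
  then have SC: "(S * C) $$ (i,j) = 0" by (rule SC_block_zero[OF i j])
  have "H $$ (i,j) = 0"
  proof -
    consider (obs) "blk n k l i \<in> {0,1,3}" "blk n k l j \<in> {2,4,5}"
      | (up) "blk n k l i \<in> {1,2}" "blk n k l j \<in> {0,3,4}"
      | (down) "blk n k l i = 5" "blk n k l j \<in> {0,3,4}"
      using z unfolding Ahat_zero_def by auto
    then show ?thesis
    proof cases
      case obs then show ?thesis by (rule H_block_zero[OF i j])
    next
      case up
      then have lt: "i < n" using blk_less_3_iff(2)[of n i k l] by (cases "i < n") auto
      have "blk n k l (i+n) \<in> {4,5}" using up blk_add_half[OF lt] by auto
      then have "R $$ (i+n, j) = 0" using R_block_zero[of j "i+n"] up j lt by auto
      then show ?thesis using index_H[OF i j] lt by simp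
    next
      case down
      then have ge: "n \<le> i" using blk_less_3_iff(1)[of i n k l] by (cases "i < n") auto
      have "blk n k l (i-n) = 2" using down blk_sub_half[OF ge i, of k l] by simp
      then have "R $$ (i-n, j) = 0" using R_block_zero[of j "i-n"] down j i by auto
      then show ?thesis using index_H[OF i j] ge by simp
    qed
  qed
  then show ?thesis
    unfolding Am_def using i j SC carrier_matD[OF H_carrier] carrier_matD[OF SC_carrier] by simp
qed

lemma Bm_block_zero:
  assumes i: "i < N" and j: "j < p" and bi: "blk n k l i \<in> {1,2,5}"
  shows "Bm $$ (i,j) = 0"
proof -
  have "(S * Sg) $$ (i,j) = (\<Sum>t<p. S $$ (i,t) * Sg $$ (t,j))"
    by (rule index_mult_mat_sum[OF S_carrier Sg i j])
  also have "\<dots> = 0" using S_block_zero[OF i _ bi] by (auto intro!: sum.neutral)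
  finally show ?thesis unfolding Bm_def using i j carrier_matD[OF S_carrier] carrier_matD[OF Sg] by simp
qed

lemma Am_eq_feedback: "Am = H + ((-1/2) \<cdot>\<^sub>m S) * C"
  by (rule eq_matI) (auto simp: Am_def mult_smult_assoc_mat[OF S_carrier C]
      carrier_matD[OF H_carrier] carrier_matD[OF SC_carrier] carrier_matD[OF S_carrier] carrier_matD[OF C])

lemma H_eq_feedback: "H = Am + ((1/2) \<cdot>\<^sub>m S) * C"
  by (rule eq_matI) (auto simp: Am_def mult_smult_assoc_mat[OF S_carrier C]
      carrier_matD[OF H_carrier] carrier_matD[OF SC_carrier] carrier_matD[OF S_carrier] carrier_matD[OF C])

text \<open>\<open>Am\<close> differs from \<open>H\<close> by output feedback, so both have the same unobservable subspace.\<close>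

lemma output_vanishing_Am_iff:
  assumes x: "x \<in> carrier_vec N"
  shows "(\<forall>j. C *\<^sub>v (Am ^\<^sub>m j *\<^sub>v x) = 0\<^sub>v p) \<longleftrightarrow> (\<forall>j. C *\<^sub>v (H ^\<^sub>m j *\<^sub>v x) = 0\<^sub>v p)"
proof
  assume "\<forall>j. C *\<^sub>v (Am ^\<^sub>m j *\<^sub>v x) = 0\<^sub>v p"
  from output_vanishing_feedback[OF C Am_carrier _ x this, of "(1/2) \<cdot>\<^sub>m S"]
  show "\<forall>j. C *\<^sub>v (H ^\<^sub>m j *\<^sub>v x) = 0\<^sub>v p" unfolding H_eq_feedback[symmetric] by simp
next
  assume "\<forall>j. C *\<^sub>v (H ^\<^sub>m j *\<^sub>v x) = 0\<^sub>v p"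
  from output_vanishing_feedback[OF C H_carrier _ x this, of "(-1/2) \<cdot>\<^sub>m S"]
  show "\<forall>j. C *\<^sub>v (Am ^\<^sub>m j *\<^sub>v x) = 0\<^sub>v p" unfolding Am_eq_feedback[symmetric] by simp
qed

lemma observable_unit_vec:
  assumes i: "i < N" and bi: "blk n k l i \<in> {0,1,3}"
  shows "unit_vec N i \<in> observable_sub N Am C"
  unfolding observable_sub_def unobservable_sub_def orth_compl_def
proof (intro CollectI conjI ballI)
  fix y assume y: "y \<in> mat_ker (obsv_mat C Am N)"
  then have yc: "y \<in> carrier_vec N" unfolding mat_ker_def using C by auto
  have "\<forall>j. C *\<^sub>v (H ^\<^sub>m j *\<^sub>v y) = 0\<^sub>v p"
    using y mat_ker_obsv_mat_iff[OF C Am_carrier yc] output_vanishing_Am_iff[OF yc] by simp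
  then have "y $ i = 0" using output_vanishing_H_iff[OF yc] i bi by blast
  then show "unit_vec N i \<bullet> y = 0" using scalar_prod_left_unit[OF yc i] by simp
qed simp

lemma unobservable_unit_vec:
  assumes i: "i < N" and bi: "blk n k l i \<in> {2,4,5}"
  shows "unit_vec N i \<in> unobservable_sub N Am C"
  unfolding unobservable_sub_def
  using unit_vec_output_vanishing[OF i bi] output_vanishing_Am_iff[OF unit_vec_carrier]
    mat_ker_obsv_mat_iff[OF C Am_carrier unit_vec_carrier] by simp

lemma pow_Am_mult_Bm_block_zero:
  "i < N \<Longrightarrow> blk n k l i \<in> {1,2,5} \<Longrightarrow> r < p \<Longrightarrow> (Am ^\<^sub>m j * Bm) $$ (i, r) = 0"
proof (induct j arbitrary: i)
  case 0
  then show ?case using Bm_block_zero[of i r] carrier_matD[OF Bm_carrier] carrier_matD[OF Am_carrier] by simp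
next
  case (Suc j)
  have AjB: "Am ^\<^sub>m j * Bm \<in> carrier_mat N p"
    by (rule mult_carrier_mat[OF pow_carrier_mat[OF Am_carrier] Bm_carrier])
  have "Am ^\<^sub>m Suc j * Bm = Am * (Am ^\<^sub>m j * Bm)"
    unfolding pow_mat_Suc_left[OF Am_carrier]
    by (rule assoc_mult_mat[OF Am_carrier pow_carrier_mat[OF Am_carrier] Bm_carrier])
  then have "(Am ^\<^sub>m Suc j * Bm) $$ (i, r) = (\<Sum>t<N. Am $$ (i,t) * (Am ^\<^sub>m j * Bm) $$ (t,r))"
    using index_mult_mat_sum[OF Am_carrier AjB Suc(2) Suc(4)] by simp
  also have "\<dots> = 0"
  proof (intro sum.neutral ballI)
    fix t assume t: "t \<in> {..<N}"
    show "Am $$ (i,t) * (Am ^\<^sub>m j * Bm) $$ (t,r) = 0"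
    proof (cases "blk n k l t \<in> {1,2,5}")
      case True then show ?thesis using Suc t by simp
    next
      case False
      then have "Ahat_zero (blk n k l i) (blk n k l t)"
        using Suc(3) blk_cases[of n k l t] unfolding Ahat_zero_def by auto
      then show ?thesis using Am_block_zero[OF Suc(2), of t] t by simp
    qed
  qed
  finally show ?case .
qed

lemma uncontrollable_unit_vec:
  assumes i: "i < N" and bi: "blk n k l i \<in> {1,2,5}"
  shows "unit_vec N i \<in> uncontrollable_sub N Am Bm"
  unfolding uncontrollable_sub_def controllable_sub_def orth_compl_def
proof (intro CollectI conjI ballI)
  fix y assume y: "y \<in> mat_image (ctrb_mat Am Bm N)"
  then obtain u where "y = ctrb_mat Am Bm N *\<^sub>v u" unfolding mat_image_def by auto
  then have yc: "y \<in> carrier_vec N" using carrier_matD[OF Bm_carrier] by (simp add: ctrb_mat_def carrier_vecI)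
  have "y $ i = 0"
    by (rule mat_image_ctrb_index_zero[OF Am_carrier Bm_carrier _ i y])
      (use pow_Am_mult_Bm_block_zero[OF i bi] in auto)
  then show "unit_vec N i \<bullet> y = 0" using scalar_prod_left_unit[OF yc i] by simp
qed simp

lemmas carrier_dims = carrier_matD[OF S_carrier] carrier_matD[OF Sg] carrier_matD[OF C] carrier_matD[OF H_carrier]
  carrier_matD[OF Am_carrier] carrier_matD[OF Bm_carrier] carrier_matD[OF R] carrier_matD[OF sharp_carrier[OF Sg]]

definition "Fm = (-1/2) \<cdot>\<^sub>m (sharp Sg * C)"

lemma sharp_Sg_carrier[simp]: "sharp Sg \<in> carrier_mat p p" using Sg by simp
lemma Fm_carrier[simp]: "Fm \<in> carrier_mat p N" unfolding Fm_def
  by (rule smult_carrier_mat[OF mult_carrier_mat[OF sharp_Sg_carrier C]])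

lemma Bm_mult_Fm: "Bm * Fm = (1/2) \<cdot>\<^sub>m (S * C)"
proof -
  have SSg: "S * Sg \<in> carrier_mat N p" by (rule mult_carrier_mat[OF S_carrier Sg])
  have sC: "sharp Sg * C \<in> carrier_mat p N" by (rule mult_carrier_mat[OF sharp_Sg_carrier C])
  have "Bm * Fm = - ((S * Sg) * ((-1/2) \<cdot>\<^sub>m (sharp Sg * C)))" unfolding Bm_def Fm_def by (simp add: carrier_dims)
  also have "(S * Sg) * ((-1/2) \<cdot>\<^sub>m (sharp Sg * C)) = (-1/2) \<cdot>\<^sub>m ((S * Sg) * (sharp Sg * C))"
    by (rule mult_smult_distrib[OF SSg sC])
  also have "(S * Sg) * (sharp Sg * C) = S * ((Sg * sharp Sg) * C)"
    using carrier_matD[OF S_carrier] carrier_matD[OF Sg] carrier_matD[OF sharp_Sg_carrier] carrier_matD[OF C]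
    by (intro mult_mat_assoc_middle) auto
  also have "\<dots> = S * C" using Sg_sharp C by simp
  finally show ?thesis by (intro eq_matI) (auto simp: carrier_matD[OF SC_carrier])
qed

lemma H_eq_Bm_feedback: "H = Am + Bm * Fm"
  unfolding Bm_mult_Fm H_eq_feedback[unfolded mult_smult_assoc_mat[OF S_carrier C]] ..

text \<open>\<open>H\<close> is Hamiltonian, \<open>J H\<^sup>T = - H J\<close>, and \<open>J C\<^sup>T\<close> factors through \<open>Bm\<close>;
  together they move \<open>J\<close> across the rows of the observability matrix.\<close>

lemma Jmat_transpose_H: "Jmat n * transpose_mat H = - (H * Jmat n)"
proof -
  have "transpose_mat H = transpose_mat R * transpose_mat (Jmat n)"
    unfolding H_def by (rule transpose_mult[OF Jmat_carrier R])
  also have "\<dots> = - (R * Jmat n)" using R_sym R by (simp add: transpose_Jmat)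
  finally have "Jmat n * transpose_mat H = - (Jmat n * (R * Jmat n))"
    using R by simp
  also have "Jmat n * (R * Jmat n) = H * Jmat n"
    unfolding H_def using R by (intro assoc_mult_mat_dims[symmetric]) auto
  finally show ?thesis .
qed

lemma Jmat_transpose_C: "Jmat n * transpose_mat C = Bm * (- (sharp Sg * Jmat m))"
proof -
  have CT: "transpose_mat C \<in> carrier_mat N p" using C by simp
  have "Bm * (- (sharp Sg * Jmat m)) = (S * Sg) * (sharp Sg * Jmat m)" unfolding Bm_def by (simp add: carrier_dims)
  also have "\<dots> = S * ((Sg * sharp Sg) * Jmat m)"
    using carrier_matD[OF S_carrier] carrier_matD[OF Sg] carrier_matD[OF sharp_Sg_carrier]
    by (intro mult_mat_assoc_middle) auto
  also have "\<dots> = S * Jmat m" using Sg_sharp by simp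
  also have "\<dots> = - ((Jmat n * transpose_mat C * Jmat m) * Jmat m)" unfolding S_def sharp_carrier_eq[OF C] by simp
  also have "(Jmat n * transpose_mat C * Jmat m) * Jmat m = (Jmat n * transpose_mat C) * (Jmat m * Jmat m)"
    using CT by (intro assoc_mult_mat_dims) auto
  also have "\<dots> = - (Jmat n * transpose_mat C)" using CT by (simp add: Jmat_mult_Jmat)
  finally show ?thesis by simp
qed

lemma Jmat_transpose_output_pow: "\<exists>G. G \<in> carrier_mat p p \<and> Jmat n * transpose_mat (C * H ^\<^sub>m j) = H ^\<^sub>m j * Bm * G"
proof (induct j)
  case 0
  have "Jmat n * transpose_mat (C * H ^\<^sub>m 0) = Jmat n * transpose_mat C"
    using C carrier_matD[OF H_carrier] by simp
  also have "\<dots> = H ^\<^sub>m 0 * Bm * (- (sharp Sg * Jmat m))"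
    using Jmat_transpose_C carrier_matD[OF H_carrier] carrier_matD[OF Bm_carrier] by simp
  finally show ?case
    by (intro exI[of _ "- (sharp Sg * Jmat m)"] conjI)
       (auto intro: uminus_carrier_mat mult_carrier_mat[OF sharp_Sg_carrier Jmat_carrier])
next
  case (Suc j)
  then obtain G where G: "G \<in> carrier_mat p p" and eq: "Jmat n * transpose_mat (C * H ^\<^sub>m j) = H ^\<^sub>m j * Bm * G" by auto
  have Hj: "H ^\<^sub>m j \<in> carrier_mat N N" by simp
  have CHj: "C * H ^\<^sub>m j \<in> carrier_mat p N" by (rule mult_carrier_mat[OF C Hj])
  have "C * H ^\<^sub>m Suc j = (C * H ^\<^sub>m j) * H"
    by (simp, rule assoc_mult_mat[symmetric, OF C Hj H_carrier])
  then have "transpose_mat (C * H ^\<^sub>m Suc j) = transpose_mat H * transpose_mat (C * H ^\<^sub>m j)"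
    using transpose_mult[OF CHj H_carrier] by simp
  then have "Jmat n * transpose_mat (C * H ^\<^sub>m Suc j) = (Jmat n * transpose_mat H) * transpose_mat (C * H ^\<^sub>m j)"
    using CHj by (simp add: assoc_mult_mat_dims carrier_dims)
  also have "\<dots> = - ((H * Jmat n) * transpose_mat (C * H ^\<^sub>m j))" unfolding Jmat_transpose_H using CHj by (simp add: carrier_dims)
  also have "(H * Jmat n) * transpose_mat (C * H ^\<^sub>m j) = H * (H ^\<^sub>m j * Bm * G)"
    unfolding eq[symmetric] using CHj by (intro assoc_mult_mat_dims) (auto simp: carrier_dims)
  also have "H * (H ^\<^sub>m j * Bm * G) = H ^\<^sub>m Suc j * Bm * G"
    unfolding pow_mat_Suc_left[OF H_carrier] using G by (simp add: assoc_mult_mat_dims carrier_dims)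
  finally have "Jmat n * transpose_mat (C * H ^\<^sub>m Suc j) = H ^\<^sub>m Suc j * Bm * (- G)" using G by (simp add: carrier_dims)
  then show ?case using G by (intro exI[of _ "- G"]) (auto intro: uminus_carrier_mat)
qed

lemma transpose_obsv_pivot:
  assumes t: "t < N" and bt: "blk n k l t \<in> {0,1,3}"
  shows "transpose_mat (obsv_mat C H N) *\<^sub>v (transpose_mat L *\<^sub>v ((1 / pivot t) \<cdot>\<^sub>v unit_vec Nr (pivot_row t))) = unit_vec N t"
proof -
  let ?u = "(1 / pivot t) \<cdot>\<^sub>v unit_vec Nr (pivot_row t)"
  have u: "?u \<in> carrier_vec Nr" by simp
  have ET: "transpose_mat E \<in> carrier_mat N Nr" by simp
  have PT: "transpose_mat P \<in> carrier_mat Nr Nr" using P by simp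
  have LT: "transpose_mat L \<in> carrier_mat Nr Nr" using L by simp
  have OE: "obsv_mat C H N = P * E" using obsv unfolding H_def E_def by simp
  have "transpose_mat (obsv_mat C H N) = transpose_mat E * transpose_mat P"
    unfolding OE by (rule transpose_mult[OF P E_carrier])
  then have "transpose_mat (obsv_mat C H N) *\<^sub>v (transpose_mat L *\<^sub>v ?u) = transpose_mat E *\<^sub>v (transpose_mat P *\<^sub>v (transpose_mat L *\<^sub>v ?u))"
    using assoc_mult_mat_vec[OF ET PT mult_mat_vec_carrier[OF LT u]] by simp
  also have "transpose_mat P *\<^sub>v (transpose_mat L *\<^sub>v ?u) = (transpose_mat P * transpose_mat L) *\<^sub>v ?u"
    by (rule assoc_mult_mat_vec[symmetric, OF PT LT u])
  also have "transpose_mat P * transpose_mat L = transpose_mat (L * P)"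
    by (rule transpose_mult[symmetric, OF L P])
  also have "\<dots> = 1\<^sub>m Nr" using LP by simp
  also have "1\<^sub>m Nr *\<^sub>v ?u = ?u" using u by simp
  also have "transpose_mat E *\<^sub>v ?u = (1 / pivot t) \<cdot>\<^sub>v (transpose_mat E *\<^sub>v unit_vec Nr (pivot_row t))"
    by (rule mult_mat_vec[OF ET]) simp
  also have "\<dots> = unit_vec N t"
  proof (rule eq_vecI)
    fix j assume "j < dim_vec (unit_vec N t :: real vec)"
    then have j: "j < N" by simp
    have "(transpose_mat E *\<^sub>v unit_vec Nr (pivot_row t)) $ j = transpose_mat E $$ (j, pivot_row t)"
      by (rule index_mult_mat_unit_vec[OF ET j pivot_row_less[OF t bt]])
    also have "\<dots> = E $$ (pivot_row t, j)" using j pivot_row_less[OF t bt] carrier_matD[OF E_carrier] by simp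
    also have "\<dots> = (if j = t then pivot t else 0)" by (rule index_E_pivot_row[OF t bt j])
    finally show "((1 / pivot t) \<cdot>\<^sub>v (transpose_mat E *\<^sub>v unit_vec Nr (pivot_row t))) $ j = unit_vec N t $ j"
      using j t pivot_nonzero[OF t bt] carrier_matD[OF E_carrier] by simp
  qed (simp add: carrier_matD[OF E_carrier])
  finally show ?thesis .
qed

lemma Jmat_mult_row_space_obsv:
  assumes w: "w \<in> carrier_vec Nr"
  shows "Jmat n *\<^sub>v (transpose_mat (obsv_mat C H N) *\<^sub>v w) \<in> krylov_space Am Bm N"
proof -
  have gc: "\<forall>j\<in>{..<N}. transpose_mat (C * H ^\<^sub>m j) *\<^sub>v vec_block p w j \<in> carrier_vec N"
    using mult_carrier_mat[OF C pow_carrier_mat[OF H_carrier]] by (auto intro!: mult_mat_vec_carrier[of _ N p])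
  have "Jmat n *\<^sub>v (transpose_mat (obsv_mat C H N) *\<^sub>v w)
      = vec N (\<lambda>i. \<Sum>j<N. (Jmat n *\<^sub>v (transpose_mat (C * H ^\<^sub>m j) *\<^sub>v vec_block p w j)) $ i)"
    unfolding transpose_obsv_mat_mult_vec[OF C H_carrier w[unfolded Nr_eq[symmetric]]]
    by (rule mult_mat_vec_vec_sum[OF Jmat_carrier gc])
  also have "\<dots> \<in> krylov_space Am Bm N"
  proof (rule krylov_space_sum[OF Am_carrier Bm_carrier], simp, intro ballI)
    fix j assume j: "j \<in> {..<N}"
    obtain G where G: "G \<in> carrier_mat p p" and eq: "Jmat n * transpose_mat (C * H ^\<^sub>m j) = H ^\<^sub>m j * Bm * G"
      using Jmat_transpose_output_pow by blast
    have CT: "transpose_mat (C * H ^\<^sub>m j) \<in> carrier_mat N p"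
      using mult_carrier_mat[OF C pow_carrier_mat[OF H_carrier]] by simp
    have Hj: "H ^\<^sub>m j \<in> carrier_mat N N" by simp
    have Gw: "G *\<^sub>v vec_block p w j \<in> carrier_vec p" by (rule mult_mat_vec_carrier[OF G vec_block_carrier])
    have "Jmat n *\<^sub>v (transpose_mat (C * H ^\<^sub>m j) *\<^sub>v vec_block p w j)
        = (H ^\<^sub>m j * Bm * G) *\<^sub>v vec_block p w j"
      unfolding eq[symmetric] by (rule assoc_mult_mat_vec[symmetric, OF Jmat_carrier CT vec_block_carrier])
    also have "\<dots> = (Am + Bm * Fm) ^\<^sub>m j *\<^sub>v (Bm *\<^sub>v (G *\<^sub>v vec_block p w j))"
      using assoc_mult_mat_vec[OF mult_carrier_mat[OF Hj Bm_carrier] G vec_block_carrier]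
        assoc_mult_mat_vec[OF Hj Bm_carrier Gw] by (simp flip: H_eq_Bm_feedback)
    also have "\<dots> \<in> krylov_space Am Bm (Suc j)"
      by (rule krylov_space_feedback_pow[OF Am_carrier Bm_carrier Fm_carrier Gw])
    finally show "Jmat n *\<^sub>v (transpose_mat (C * H ^\<^sub>m j) *\<^sub>v vec_block p w j) \<in> krylov_space Am Bm N"
      using krylov_space_mono[OF Am_carrier Bm_carrier, of "Suc j" N] j by auto
  qed
  finally show ?thesis .
qed

text \<open>A controllable coordinate is \<open>\<plusminus>J\<close> applied to an observable one, which lies in the
  row space of the observability matrix.\<close>

lemma controllable_unit_vec:
  assumes s: "s < N" and bs: "blk n k l s \<in> {0,3,4}"
  shows "unit_vec N s \<in> controllable_sub N Am Bm"
proof -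
  define t where "t = (if s < n then s + n else s - n)"
  have t: "t < N" using s by (auto simp: t_def)
  have bt: "blk n k l t \<in> {0,1,3}"
  proof (cases "s < n")
    case True then show ?thesis
      using bs blk_add_half[OF True, of k l] blk_less_3_iff(1)[OF True, of k l] by (auto simp: t_def)
  next
    case False then show ?thesis using bs blk_sub_half[of n s k l] s by (auto simp: t_def)
  qed
  have w: "transpose_mat L *\<^sub>v ((1 / pivot t) \<cdot>\<^sub>v unit_vec Nr (pivot_row t)) \<in> carrier_vec Nr"
    using L by (auto intro: mult_mat_vec_carrier)
  have Jt: "Jmat n *\<^sub>v unit_vec N t \<in> krylov_space Am Bm N"
    using Jmat_mult_row_space_obsv[OF w] unfolding transpose_obsv_pivot[OF t bt] .
  define sg :: real where "sg = (if s < n then 1 else -1)"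
  have "unit_vec N s = sg \<cdot>\<^sub>v (Jmat n *\<^sub>v unit_vec N t)"
  proof (rule eq_vecI)
    fix i assume "i < dim_vec (sg \<cdot>\<^sub>v (Jmat n *\<^sub>v unit_vec N t))"
    then have i: "i < N" by simp
    show "unit_vec N s $ i = (sg \<cdot>\<^sub>v (Jmat n *\<^sub>v unit_vec N t)) $ i"
      using i s index_Jmat_mult_vec[OF unit_vec_carrier i, of t] by (auto simp: sg_def t_def unit_vec_def)
  qed simp
  then have "unit_vec N s \<in> krylov_space Am Bm N" using krylov_space_smult[OF Am_carrier Bm_carrier Jt] by simp
  then show ?thesis unfolding controllable_sub_def using krylov_space_subset_ctrb[OF Am_carrier Bm_carrier] by auto
qed

lemma kalman_like_form_identity: "kalman_like_form n k l Am Bm C (1\<^sub>m N)"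
proof -
  have "minv (1\<^sub>m N) = 1\<^sub>m N" by (rule minv_eqI) auto
  moreover have "dim_col Bm = p" "dim_row C = p" using C carrier_matD[OF Bm_carrier] by auto
  ultimately show ?thesis
    unfolding kalman_like_form_def Let_def Bhat_zero_def Chat_zero_def
    using symplectic_one controllable_unit_vec observable_unit_vec unobservable_unit_vec
      uncontrollable_unit_vec Am_block_zero Bm_block_zero C_block_zero
    by (auto simp: carrier_matD[OF Am_carrier] carrier_matD[OF Bm_carrier] carrier_matD[OF C])
qed

lemma kalman_like_form_hamiltonian:
  "kalman_like_form n k l (Jmat n * R - (1/2) \<cdot>\<^sub>m (sharp C * C)) (- (sharp C * Sg)) C (1\<^sub>m N)"
  using kalman_like_form_identity unfolding Am_def H_def S_def Bm_def .

end

section \<open>Symplectic change of coordinates\<close>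

lemma kalman_like_form_transformI:
  assumes V: "symplectic n V"
    and K: "kalman_like_form n k l (V * A * minv V) (V * B) (C * minv V) (1\<^sub>m (2*n))"
  shows "kalman_like_form n k l A B C V"
proof -
  have W: "minv V \<in> carrier_mat (2*n) (2*n)"
    using V by (simp add: symplectic_minv symplectic_carrier)
  have "minv (1\<^sub>m (2*n)) = (1\<^sub>m (2*n) :: real mat)" by (rule minv_eqI) auto
  moreover have "dim_row V = 2*n" using symplectic_carrier[OF V] by simp
  ultimately show ?thesis
    using K V W unfolding kalman_like_form_def Let_def by simp
qed

context
  fixes n :: nat and V :: "real mat"
  assumes V: "symplectic n V"
begin

lemma minv_symplectic_carrier: "minv V \<in> carrier_mat (2*n) (2*n)"
  using V by (simp add: symplectic_minv symplectic_carrier)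

lemma minv_mult_symplectic: "minv V * V = 1\<^sub>m (2*n)"
  using V unfolding symplectic_minv[OF V] symplectic_def by simp

lemma sharp_minv_symplectic: "sharp (minv V) = V"
  using sharp_sharp[OF symplectic_carrier[OF V]] by (simp add: symplectic_minv[OF V])

lemma sharp_mult_minv_symplectic:
  "C \<in> carrier_mat (2*m) (2*n) \<Longrightarrow> sharp (C * minv V) = V * sharp C"
  using sharp_mult[OF _ minv_symplectic_carrier] by (simp add: sharp_minv_symplectic)

lemma symplectic_conj_Jmat_mult:
  assumes R: "R \<in> carrier_mat (2*n) (2*n)"
  shows "V * (Jmat n * R) * minv V = Jmat n * (transpose_mat (minv V) * R * minv V)"
proof -
  let ?W = "minv V"
  have W: "?W \<in> carrier_mat (2*n) (2*n)" and WT: "transpose_mat ?W \<in> carrier_mat (2*n) (2*n)"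
    using minv_symplectic_carrier by auto
  have "V * (Jmat n * R) = - (Jmat n * transpose_mat ?W * Jmat n) * (Jmat n * R)"
    using sharp_carrier_eq[OF W] sharp_minv_symplectic by simp
  also have "\<dots> = - ((Jmat n * transpose_mat ?W) * (Jmat n * (Jmat n * R)))"
    using WT R by (simp add: assoc_mult_mat_dims)
  also have "\<dots> = (Jmat n * transpose_mat ?W) * R"
    using WT R by (simp add: Jmat_mult_Jmat_mult)
  finally show ?thesis using WT R W by (simp add: assoc_mult_mat_dims)
qed

lemma symplectic_conj_hamiltonian:
  assumes R: "R \<in> carrier_mat (2*n) (2*n)" and C: "C \<in> carrier_mat (2*m) (2*n)"
  shows "V * (Jmat n * R - (1/2) \<cdot>\<^sub>m (sharp C * C)) * minv V
       = Jmat n * (transpose_mat (minv V) * R * minv V) - (1/2) \<cdot>\<^sub>m (sharp (C * minv V) * (C * minv V))"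
proof -
  have W: "minv V \<in> carrier_mat (2*n) (2*n)" by (rule minv_symplectic_carrier)
  have Vc: "V \<in> carrier_mat (2*n) (2*n)" by (rule symplectic_carrier[OF V])
  have JR: "Jmat n * R \<in> carrier_mat (2*n) (2*n)" by (rule mult_carrier_mat[OF Jmat_carrier R])
  have SC: "sharp C * C \<in> carrier_mat (2*n) (2*n)" using C by (simp add: mult_carrier_mat[OF sharp_carrier])
  have "V * (Jmat n * R - (1/2) \<cdot>\<^sub>m (sharp C * C)) * minv V
      = V * (Jmat n * R) * minv V - (1/2) \<cdot>\<^sub>m (V * (sharp C * C) * minv V)"
    using Vc JR SC W
    by (simp add: mult_minus_distrib_mat[of _ "2*n" "2*n"] minus_mult_distrib_mat[of _ "2*n" "2*n"]
        mult_smult_distrib[of _ "2*n" "2*n"] mult_smult_assoc_mat[of _ "2*n" "2*n"])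
  also have "V * (sharp C * C) * minv V = sharp (C * minv V) * (C * minv V)"
    using Vc C W carrier_matD[OF sharp_carrier[OF C]]
    by (simp add: sharp_mult_minv_symplectic[OF C] assoc_mult_mat_dims)
  finally show ?thesis using symplectic_conj_Jmat_mult[OF R] by simp
qed

lemma symplectic_conj_input:
  assumes C: "C \<in> carrier_mat (2*m) (2*n)" and Sg: "Sg \<in> carrier_mat (2*m) (2*m)"
  shows "V * (- (sharp C * Sg)) = - (sharp (C * minv V) * Sg)"
  using symplectic_carrier[OF V] sharp_carrier[OF C] Sg
  by (simp add: sharp_mult_minv_symplectic[OF C] assoc_mult_mat_dims)

lemma obsv_mat_symplectic_conj:
  assumes R: "R \<in> carrier_mat (2*n) (2*n)" and C: "C \<in> carrier_mat p (2*n)"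
  shows "obsv_mat (C * minv V) (Jmat n * (transpose_mat (minv V) * R * minv V)) M
       = obsv_mat C (Jmat n * R) M * minv V"
  using obsv_mat_similar[OF C mult_carrier_mat[OF Jmat_carrier R] symplectic_carrier[OF V]
      minv_symplectic_carrier minv_mult_symplectic, of M]
  by (simp add: symplectic_conj_Jmat_mult[OF R])

lemma kalman_like_form_symplectic_changeI:
  assumes R: "R \<in> carrier_mat (2*n) (2*n)" and C: "C \<in> carrier_mat (2*m) (2*n)"
    and Sg: "Sg \<in> carrier_mat (2*m) (2*m)"
    and K: "kalman_like_form n k l
      (Jmat n * (transpose_mat (minv V) * R * minv V)
         - (1/2) \<cdot>\<^sub>m (sharp (C * minv V) * (C * minv V)))
      (- (sharp (C * minv V) * Sg)) (C * minv V) (1\<^sub>m (2*n))"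
  shows "kalman_like_form n k l (Jmat n * R - (1/2) \<cdot>\<^sub>m (sharp C * C)) (- (sharp C * Sg)) C V"
  using K by (intro kalman_like_form_transformI[OF V])
    (simp add: symplectic_conj_hamiltonian[OF R C] symplectic_conj_input[OF C Sg])

end

lemma transpose_conj_symmetric:
  fixes W R :: "'a :: comm_semiring_1 mat"
  assumes W: "W \<in> carrier_mat d d" and R: "R \<in> carrier_mat d d" and R_sym: "transpose_mat R = R"
  shows "transpose_mat (transpose_mat W * R * W) = transpose_mat W * R * W"
proof -
  have WT: "transpose_mat W \<in> carrier_mat d d" using W by simp
  have "transpose_mat (transpose_mat W * R * W) = transpose_mat W * transpose_mat (transpose_mat W * R)"
    by (rule transpose_mult[OF mult_carrier_mat[OF WT R] W])
  also have "transpose_mat (transpose_mat W * R) = transpose_mat R * W"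
    using W R by (simp add: transpose_mult[of _ d d])
  finally show ?thesis using W R R_sym by (simp add: assoc_mult_mat_dims)
qed

lemma minv_mult_cancel_factorization:
  fixes Q E X Y Z :: "real mat"
  assumes Q: "Q \<in> carrier_mat r r" and E: "E \<in> carrier_mat r d"
    and Y: "Y \<in> carrier_mat d d" and Z: "Z \<in> carrier_mat d d" "minv Z \<in> carrier_mat d d"
    and ZZ: "minv Z * Z = 1\<^sub>m d"
    and X: "X \<in> carrier_mat r r" "invertible_mat X"
  shows "Q * E * minv Z * (Z * Y) = (Q * minv X) * (X * E * Y)"
proof -
  note Xi = minv_invertible_mat[OF X]
  have "Q * E * minv Z * (Z * Y) = Q * (E * ((minv Z * Z) * Y))"
    using Q E Y Z by (simp add: assoc_mult_mat_dims)
  also have "\<dots> = Q * ((minv X * X) * E * Y)" using ZZ Xi(3) Y E by simp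
  also have "\<dots> = (Q * minv X) * (X * E * Y)"
    using Q E Y X Xi(1) by (simp add: assoc_mult_mat_dims)
  finally show ?thesis .
qed

theorem corollary1:
  fixes n m k l :: nat
    and R C \<Sigma> Q Z X Y :: "real mat"
    and \<xi> a b c :: "nat \<Rightarrow> real"
  assumes "n \<ge> 1" and "m \<ge> 1"
    and "R \<in> carrier_mat (2*n) (2*n)" and "transpose_mat R = R"
    and "C \<in> carrier_mat (2*m) (2*n)"
    and "symplectic m \<Sigma>"
    and "k + l \<le> n"
    and "Q \<in> carrier_mat (4*n*m) (4*n*m)"
    and "Q * transpose_mat Q = 1\<^sub>m (4*n*m)" and "transpose_mat Q * Q = 1\<^sub>m (4*n*m)"
    and "symplectic n Z"
    and "\<forall>i<k. \<xi> i > 0"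
    and "obsv_mat C (Jmat n * R) (2*n) = Q * blockE (4*n*m) n k l \<xi> (\<lambda>_. 1) \<xi> * minv Z"
    and "X \<in> carrier_mat (4*n*m) (4*n*m)" and "invertible_mat X"
    and "symplectic n Y"
    and "\<forall>i<k. a i \<noteq> 0" and "\<forall>i<l. b i \<noteq> 0" and "\<forall>i<k. c i \<noteq> 0"
    and "X * blockE (4*n*m) n k l \<xi> (\<lambda>_. 1) \<xi> * Y = blockE (4*n*m) n k l a b c"
  shows "kalman_like_form n k l
           (Jmat n * R - (1/2) \<cdot>\<^sub>m (sharp C * C))
           (- (sharp C * \<Sigma>))
           C
           (minv Y * minv Z)"
proof -
  note R = assms(3) and C = assms(5) and Sg = assms(6) and Q = assms(8) and QQ = assms(10)
    and Z = assms(11) and obsv = assms(13) and X = assms(14,15) and Y = assms(16) and XEY = assms(20)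
  define V where "V = minv Y * minv Z"
  have V: "symplectic n V" and W: "minv V = Z * Y"
    unfolding V_def by (rule symplectic_minv_mult[OF Y Z])+
  let ?R = "transpose_mat (minv V) * R * minv V" and ?C = "C * minv V"
  have "obsv_mat ?C (Jmat n * ?R) (2*n) = obsv_mat C (Jmat n * R) (2*n) * minv V"
    by (rule obsv_mat_symplectic_conj[OF V R C])
  also have "\<dots> = Q * blockE (4*n*m) n k l \<xi> (\<lambda>_. 1) \<xi> * minv Z * (Z * Y)"
    unfolding obsv W ..
  also have "\<dots> = (Q * minv X) * blockE (4*n*m) n k l a b c"
    unfolding XEY[symmetric]
    by (rule minv_mult_cancel_factorization[OF Q _ symplectic_carrier[OF Y] symplectic_carrier[OF Z]
          minv_symplectic_carrier[OF Z] minv_mult_symplectic[OF Z] X]) (simp add: blockE_def)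
  finally have obsv': "obsv_mat ?C (Jmat n * ?R) (2*n) = (Q * minv X) * blockE (4*n*m) n k l a b c" .
  have "(X * transpose_mat Q) * (Q * minv X) = X * ((transpose_mat Q * Q) * minv X)"
    using Q X minv_invertible_mat[OF X] by (intro mult_mat_assoc_middle) auto
  then have LP: "(X * transpose_mat Q) * (Q * minv X) = 1\<^sub>m (4*n*m)"
    using QQ minv_invertible_mat[OF X] by simp
  have "obsv_block_factorization n m k l ?R ?C \<Sigma> (Q * minv X) (X * transpose_mat Q) a b c"
    using assms(1,2,4,7,17-19) R C Sg Q X minv_invertible_mat[OF X] LP obsv'
      transpose_conj_symmetric[OF minv_symplectic_carrier[OF V] R assms(4)] minv_symplectic_carrier[OF V]
    by unfold_locales (auto simp: symplectic_def)
  then have "kalman_like_form n k l (Jmat n * ?R - (1/2) \<cdot>\<^sub>m (sharp ?C * ?C)) (- (sharp ?C * \<Sigma>)) ?C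
      (1\<^sub>m (2*n))"
    by (rule obsv_block_factorization.kalman_like_form_hamiltonian)
  then show ?thesis
    unfolding V_def[symmetric]
    by (rule kalman_like_form_symplectic_changeI[OF V R C symplectic_carrier[OF Sg]])
qed

end
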